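(* Let $X,Y,E,F$ be in Situation 1 or Situation 2 (see context), and suppose $Z(E)$ and $Z(F)$ are one-dimensional. If $T:A(X,E)\to A(Y,F)$ is a surjective linear isometry, then $T$ is biseparating.
   Context: $\mathbb K=\mathbb R$ or $\mathbb C$; $E,F$ are $\mathbb K$-Banach spaces. Situation 1: $X,Y$ realcompact completely regular, $E,F$ infinite-dimensional, $A(X,E)=C_b(X,E)$, $A(Y,F)=C_b(Y,F)$ (bounded continuous functions). Situation 2: $X,Y$ complete metric spaces, $A(X,E)=C_b^u(X,E)$, $A(Y,F)=C_b^u(Y,F)$ (bounded uniformly continuous functions). All carry the sup norm. For a Banach space $W$, ${\rm Ext}_W$ is the set of extreme points of the closed unit ball of $W'$. A continuous linear $S:W\to W$ is a multiplier if there is $a_S:{\rm Ext}_W\to\mathbb K$ with $p\circ S=a_S(p)p$ for all $p\in{\rm Ext}_W$; $R$ is an adjoint of the multiplier $S$ if $a_R=\overline{a_S}$; the centralizer $Z(W)$ is the set of multipliers having an adjoint; $Z(W)$ one-dimensional means $Z(W)=\mathbb K\,\mathrm{Id}_W$. The cozero set is $c(f)=\{x:f(x)\neq0\}$; $T$ is separating if additive and $c(Tf)\cap c(Tg)=\emptyset$ whenever $c(f)\cap c(g)=\emptyset$; biseparating if bijective with $T$ and $T^{-1}$ separating. *)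

theory Defs
  imports "HOL-Analysis.Analysis"
begin

text \<open>The scalar field K is modelled as a subset of the complex numbers: K = \<real> or K = UNIV.
A K-Banach space is a real Banach space (type class banach) together with a scalar
action sc of K which extends the real scalar multiplication and is absolutely homogeneous.\<close>

definition K_banach :: "complex set \<Rightarrow> (complex \<Rightarrow> 'e::banach \<Rightarrow> 'e) \<Rightarrow> bool" where
  "K_banach K sc \<longleftrightarrow>
     (\<forall>r x. sc (complex_of_real r) x = r *\<^sub>R x) \<and>
     (\<forall>a\<in>K. \<forall>b\<in>K. \<forall>x. sc (a * b) x = sc a (sc b x)) \<and>
     (\<forall>a\<in>K. \<forall>b\<in>K. \<forall>x. sc (a + b) x = sc a x + sc b x) \<and>
     (\<forall>a\<in>K. \<forall>x y. sc a (x + y) = sc a x + sc a y) \<and>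
     (\<forall>a\<in>K. \<forall>x. norm (sc a x) = cmod a * norm x)"

definition K_infinite_dim :: "complex set \<Rightarrow> (complex \<Rightarrow> 'e::banach \<Rightarrow> 'e) \<Rightarrow> bool" where
  "K_infinite_dim K sc \<longleftrightarrow>
     \<not> (\<exists>B. finite B \<and> (\<forall>x. \<exists>c. (\<forall>b\<in>B. c b \<in> K) \<and> x = (\<Sum>b\<in>B. sc (c b) b)))"

definition K_dual :: "complex set \<Rightarrow> (complex \<Rightarrow> 'e::banach \<Rightarrow> 'e) \<Rightarrow> ('e \<Rightarrow> complex) set" where
  "K_dual K sc = {p. (\<forall>x. p x \<in> K) \<and> (\<forall>x y. p (x + y) = p x + p y) \<and>
                     (\<forall>a\<in>K. \<forall>x. p (sc a x) = a * p x) \<and> (\<exists>C. \<forall>x. cmod (p x) \<le> C * norm x)}"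

definition K_dual_ball :: "complex set \<Rightarrow> (complex \<Rightarrow> 'e::banach \<Rightarrow> 'e) \<Rightarrow> ('e \<Rightarrow> complex) set" where
  "K_dual_ball K sc = {p \<in> K_dual K sc. \<forall>x. cmod (p x) \<le> norm x}"

definition Ext :: "complex set \<Rightarrow> (complex \<Rightarrow> 'e::banach \<Rightarrow> 'e) \<Rightarrow> ('e \<Rightarrow> complex) set" where
  "Ext K sc = {p \<in> K_dual_ball K sc.
       \<forall>q\<in>K_dual_ball K sc. \<forall>r\<in>K_dual_ball K sc. \<forall>t::real. 0 < t \<and> t < 1 \<and>
          p = (\<lambda>x. complex_of_real t * q x + complex_of_real (1 - t) * r x) \<longrightarrow> q = r}"

definition K_cont_linear :: "complex set \<Rightarrow> (complex \<Rightarrow> 'e::banach \<Rightarrow> 'e) \<Rightarrow>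
    (complex \<Rightarrow> 'f::banach \<Rightarrow> 'f) \<Rightarrow> ('e \<Rightarrow> 'f) \<Rightarrow> bool" where
  "K_cont_linear K sc sc' S \<longleftrightarrow> (\<forall>x y. S (x + y) = S x + S y) \<and>
      (\<forall>a\<in>K. \<forall>x. S (sc a x) = sc' a (S x)) \<and> (\<exists>C. \<forall>x. norm (S x) \<le> C * norm x)"

definition multiplier_with :: "complex set \<Rightarrow> (complex \<Rightarrow> 'e::banach \<Rightarrow> 'e) \<Rightarrow> ('e \<Rightarrow> 'e) \<Rightarrow>
    (('e \<Rightarrow> complex) \<Rightarrow> complex) \<Rightarrow> bool" where
  "multiplier_with K sc S a \<longleftrightarrow> K_cont_linear K sc sc S \<and>
      (\<forall>p\<in>Ext K sc. a p \<in> K \<and> p \<circ> S = (\<lambda>x. a p * p x))"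

definition centralizer :: "complex set \<Rightarrow> (complex \<Rightarrow> 'e::banach \<Rightarrow> 'e) \<Rightarrow> ('e \<Rightarrow> 'e) set" where
  "centralizer K sc = {S. \<exists>aS. multiplier_with K sc S aS \<and>
       (\<exists>R aR. multiplier_with K sc R aR \<and> (\<forall>p\<in>Ext K sc. aR p = cnj (aS p)))}"

definition centralizer_one_dim :: "complex set \<Rightarrow> (complex \<Rightarrow> 'e::banach \<Rightarrow> 'e) \<Rightarrow> bool" where
  "centralizer_one_dim K sc \<longleftrightarrow> centralizer K sc = {(\<lambda>x. sc c x) | c. c \<in> K}"

text \<open>The index set may be taken inside the set of real-valued functions on the points of X
(the evaluation map over C(X) works whenever some closed embedding exists).\<close>
definition realcompact :: "'a topology \<Rightarrow> bool" where
  "realcompact X \<longleftrightarrow> (\<exists>(I :: ('a \<Rightarrow> real) set) f. embedding_map X (powertop_real I) f \<and>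
       closedin (powertop_real I) (f ` topspace X))"

definition Cb :: "'x topology \<Rightarrow> ('x \<Rightarrow> 'e::banach) set" where
  "Cb X = {f. continuous_map X euclidean f \<and> bounded (f ` topspace X) \<and>
              (\<forall>x. x \<notin> topspace X \<longrightarrow> f x = 0)}"

definition Cbu :: "'x metric \<Rightarrow> ('x \<Rightarrow> 'e::banach) set" where
  "Cbu m = {f. uniformly_continuous_map m euclidean_metric f \<and> bounded (f ` mspace m) \<and>
              (\<forall>x. x \<notin> mspace m \<longrightarrow> f x = 0)}"

definition supnorm :: "'x topology \<Rightarrow> ('x \<Rightarrow> 'e::real_normed_vector) \<Rightarrow> real" where
  "supnorm X f = Sup (insert 0 ((\<lambda>x. norm (f x)) ` topspace X))"

definition cozero :: "'x topology \<Rightarrow> ('x \<Rightarrow> 'e::zero) \<Rightarrow> 'x set" where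
  "cozero X f = {x \<in> topspace X. f x \<noteq> 0}"

definition separating :: "'x topology \<Rightarrow> 'y topology \<Rightarrow> ('x \<Rightarrow> 'e::banach) set \<Rightarrow>
    (('x \<Rightarrow> 'e) \<Rightarrow> ('y \<Rightarrow> 'f::banach)) \<Rightarrow> bool" where
  "separating X Y A T \<longleftrightarrow> (\<forall>f\<in>A. \<forall>g\<in>A. T (\<lambda>x. f x + g x) = (\<lambda>y. T f y + T g y)) \<and>
      (\<forall>f\<in>A. \<forall>g\<in>A. cozero X f \<inter> cozero X g = {} \<longrightarrow> cozero Y (T f) \<inter> cozero Y (T g) = {})"

definition biseparating :: "'x topology \<Rightarrow> 'y topology \<Rightarrow> ('x \<Rightarrow> 'e::banach) set \<Rightarrow>
    ('y \<Rightarrow> 'f::banach) set \<Rightarrow> (('x \<Rightarrow> 'e) \<Rightarrow> ('y \<Rightarrow> 'f)) \<Rightarrow> bool" where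
  "biseparating X Y A B T \<longleftrightarrow> bij_betw T A B \<and> separating X Y A T \<and>
      separating Y X B (inv_into A T)"

end

(*
  A surjective linear isometry T pulls extreme functionals of the dual ball of A(Y,F) back to
  extreme functionals of A(X,E).  An extreme functional Phi of such a function space is
  multiplicative for every scalar function 0 <= h <= 1 acting on it, Phi(h u) = a Phi(u) with a
  real, because Phi(h .) and Phi((1 - h) .) have norms adding up to 1.  Hence, for
  h = min 1 (n ||f||), the operator u |-> T(h T^-1 u) multiplies all extreme functionals by real
  numbers.  As u |-> p(u(y)) is extreme for every nonzero extreme point p of Ball(F'), this
  operator acts at each point y as an element of the centralizer of F, i.e. as a scalar k.  If f
  and g have disjoint cozero sets then h g = 0, so k = 0 as soon as Tg(y) <> 0, and then
  ||Tf(y)|| = ||T((1 - h) f)(y)|| <= 1/n.  One-dimensionality of Z(F) also makes the extreme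
  functionals separate the points of F (Hahn-Banach and a rank-one multiplier).
*)

theory Submission
  imports Defs
begin

section \<open>Norming functionals via Zorn's lemma\<close>

text \<open>Partial functionals are represented by their graphs, so that Zorn's lemma can be applied
  to set inclusion.\<close>

definition norming_graph :: "'f::real_normed_vector \<Rightarrow> ('f \<times> real) set \<Rightarrow> bool" where
  "norming_graph w G \<longleftrightarrow> single_valued G \<and>
     (\<forall>x a y b. (x, a) \<in> G \<longrightarrow> (y, b) \<in> G \<longrightarrow> (x + y, a + b) \<in> G) \<and>
     (\<forall>x a r. (x, a) \<in> G \<longrightarrow> (r *\<^sub>R x, r * a) \<in> G) \<and>
     (\<forall>x a. (x, a) \<in> G \<longrightarrow> a \<le> norm x) \<and> (w, norm w) \<in> G"

lemma norming_graphD: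
  assumes "norming_graph w G"
  shows "single_valued G" "(x, a) \<in> G \<Longrightarrow> (y, b) \<in> G \<Longrightarrow> (x + y, a + b) \<in> G"
    "(x, a) \<in> G \<Longrightarrow> (r *\<^sub>R x, r * a) \<in> G" "(x, a) \<in> G \<Longrightarrow> a \<le> norm x" "(w, norm w) \<in> G"
  using assms unfolding norming_graph_def by blast+

lemma norming_graph_line: "norming_graph w (range (\<lambda>r. (r *\<^sub>R w, r * norm w)))"
  unfolding norming_graph_def
proof (intro conjI allI impI single_valuedI)
  fix x a b assume "(x, a) \<in> range (\<lambda>r. (r *\<^sub>R w, r * norm w))" "(x, b) \<in> range (\<lambda>r. (r *\<^sub>R w, r * norm w))"
  then obtain r s where "(x, a) = (r *\<^sub>R w, r * norm w)" "(x, b) = (s *\<^sub>R w, s * norm w)" by blast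
  then show "a = b" by (cases "w = 0") (auto simp: scaleR_cancel_right)
next
  fix x a y b
  assume "(x, a) \<in> range (\<lambda>r. (r *\<^sub>R w, r * norm w))" "(y, b) \<in> range (\<lambda>r. (r *\<^sub>R w, r * norm w))"
  then obtain r s where "(x, a) = (r *\<^sub>R w, r * norm w)" "(y, b) = (s *\<^sub>R w, s * norm w)" by blast
  then show "(x + y, a + b) \<in> range (\<lambda>r. (r *\<^sub>R w, r * norm w))"
    using rangeI[of "\<lambda>r. (r *\<^sub>R w, r * norm w)" "r + s"] by (simp add: scaleR_add_left distrib_right)
next
  fix x a t assume "(x, a) \<in> range (\<lambda>r. (r *\<^sub>R w, r * norm w))"
  then obtain r where "(x, a) = (r *\<^sub>R w, r * norm w)" by blast
  then show "(t *\<^sub>R x, t * a) \<in> range (\<lambda>r. (r *\<^sub>R w, r * norm w))"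
    using rangeI[of "\<lambda>r. (r *\<^sub>R w, r * norm w)" "t * r"] by (simp add: mult.assoc)
next
  fix x a assume "(x, a) \<in> range (\<lambda>r. (r *\<^sub>R w, r * norm w))"
  then show "a \<le> norm x" by (auto intro!: mult_right_mono)
next
  show "(w, norm w) \<in> range (\<lambda>r. (r *\<^sub>R w, r * norm w))"
    using rangeI[of "\<lambda>r. (r *\<^sub>R w, r * norm w)" 1] by simp
qed

lemma norming_graph_Union_chain:
  assumes "C \<in> chains {G. norming_graph w G}" "C \<noteq> {}"
  shows "norming_graph w (\<Union>C)"
proof -
  have good: "\<And>G. G \<in> C \<Longrightarrow> norming_graph w G"
    using assms(1) unfolding chains_def by blast
  have common: "\<exists>G\<in>C. p \<in> G \<and> q \<in> G" if pq: "p \<in> \<Union>C" "q \<in> \<Union>C" for p q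
  proof -
    obtain G H where "G \<in> C" "H \<in> C" "p \<in> G" "q \<in> H" using pq by blast
    moreover have "G \<subseteq> H \<or> H \<subseteq> G"
      using assms(1) calculation(1,2) unfolding chains_def chain_subset_def by blast
    ultimately show ?thesis by blast
  qed
  show ?thesis
    unfolding norming_graph_def
  proof (intro conjI allI impI single_valuedI)
    fix x a b assume "(x, a) \<in> \<Union>C" "(x, b) \<in> \<Union>C"
    then obtain G where "G \<in> C" "(x, a) \<in> G" "(x, b) \<in> G" using common by blast
    then show "a = b" using norming_graphD(1)[OF good] single_valuedD by metis
  next
    fix x a y b assume "(x, a) \<in> \<Union>C" "(y, b) \<in> \<Union>C"
    then obtain G where "G \<in> C" "(x, a) \<in> G" "(y, b) \<in> G" using common by blast
    then show "(x + y, a + b) \<in> \<Union>C" using norming_graphD(2)[OF good] by blast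
  next
    fix x a r assume "(x, a) \<in> \<Union>C"
    then obtain G where "G \<in> C" "(x, a) \<in> G" by blast
    then show "(r *\<^sub>R x, r * a) \<in> \<Union>C" using norming_graphD(3)[OF good] by blast
  next
    fix x a assume "(x, a) \<in> \<Union>C"
    then obtain G where "G \<in> C" "(x, a) \<in> G" by blast
    then show "a \<le> norm x" using norming_graphD(4)[OF good] by blast
  next
    obtain G where "G \<in> C" using assms(2) by blast
    then show "(w, norm w) \<in> \<Union>C" using norming_graphD(5)[OF good] by blast
  qed
qed

lemma norming_graph_extension_constant:
  assumes G: "norming_graph w G"
  obtains c where "\<And>y a. (y, a) \<in> G \<Longrightarrow> a - norm (y - x0) \<le> c"
    and "\<And>z b. (z, b) \<in> G \<Longrightarrow> c \<le> norm (z + x0) - b"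
proof -
  have key: "a - norm (y - x0) \<le> norm (z + x0) - b" if ya: "(y, a) \<in> G" and zb: "(z, b) \<in> G" for y a z b
  proof -
    have "a + b \<le> norm ((y - x0) + (z + x0))"
      using norming_graphD(4)[OF G norming_graphD(2)[OF G ya zb]] by simp
    also have "\<dots> \<le> norm (y - x0) + norm (z + x0)" by (rule norm_triangle_ineq)
    finally show ?thesis by simp
  qed
  define L where "L = {a - norm (y - x0) | y a. (y, a) \<in> G}"
  have wG: "(w, norm w) \<in> G" by (rule norming_graphD(5)[OF G])
  have L_nonempty: "L \<noteq> {}" using wG unfolding L_def by blast
  have L_bdd: "bdd_above L"
  proof (rule bdd_aboveI)
    fix l assume "l \<in> L"
    then show "l \<le> norm (w + x0) - norm w" using key[OF _ wG] unfolding L_def by blast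
  qed
  show ?thesis
  proof (rule that[of "Sup L"])
    show "a - norm (y - x0) \<le> Sup L" if "(y, a) \<in> G" for y a
      by (rule cSup_upper[OF _ L_bdd]) (use that in \<open>auto simp: L_def\<close>)
    show "Sup L \<le> norm (z + x0) - b" if zb: "(z, b) \<in> G" for z b
    proof (rule cSup_least[OF L_nonempty])
      fix l assume "l \<in> L"
      then show "l \<le> norm (z + x0) - b" using key[OF _ zb] unfolding L_def by blast
    qed
  qed
qed

lemma norming_graph_extension_dominated:
  assumes G: "norming_graph w G" and y: "(y, a) \<in> G"
    and below: "\<And>y a. (y, a) \<in> G \<Longrightarrow> a - norm (y - x0) \<le> c"
    and above: "\<And>z b. (z, b) \<in> G \<Longrightarrow> c \<le> norm (z + x0) - b"
  shows "a + t * c \<le> norm (y + t *\<^sub>R x0)"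
proof -
  have scaled: "((1 / s) *\<^sub>R y, (1 / s) * a) \<in> G" for s
    by (rule norming_graphD(3)[OF G y])
  consider "t = 0" | "t > 0" | "t < 0" by linarith
  then show ?thesis
  proof cases
    case 1
    then show ?thesis using norming_graphD(4)[OF G y] by simp
  next
    case 2
    have "t * c \<le> t * (norm ((1 / t) *\<^sub>R y + x0) - (1 / t) * a)"
      using above[OF scaled] 2 by (intro mult_left_mono) auto
    moreover have "t * norm ((1 / t) *\<^sub>R y + x0) = norm (t *\<^sub>R ((1 / t) *\<^sub>R y + x0))"
      using 2 by simp
    moreover have "t *\<^sub>R ((1 / t) *\<^sub>R y + x0) = y + t *\<^sub>R x0"
      using 2 by (simp add: algebra_simps)
    ultimately show ?thesis using 2 by (simp add: algebra_simps)
  next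
    case 3
    have "(-t) * ((1 / -t) * a - norm ((1 / -t) *\<^sub>R y - x0)) \<le> (-t) * c"
      using below[OF scaled, of "-t"] 3 by (intro mult_left_mono) auto
    moreover have "(-t) * norm ((1 / -t) *\<^sub>R y - x0) = norm ((-t) *\<^sub>R ((1 / -t) *\<^sub>R y - x0))"
      using 3 by simp
    moreover have "(-t) *\<^sub>R ((1 / -t) *\<^sub>R y - x0) = y + t *\<^sub>R x0"
      using 3 by (simp add: algebra_simps)
    ultimately show ?thesis using 3 by (simp add: algebra_simps)
  qed
qed

lemma norming_graph_extension_unique:
  assumes G: "norming_graph w G" and x0: "x0 \<notin> Domain G"
    and y1: "(y1, a1) \<in> G" and y2: "(y2, a2) \<in> G" and eq: "y1 + t1 *\<^sub>R x0 = y2 + t2 *\<^sub>R x0"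
  shows "t1 = t2" "y1 = y2"
proof -
  show "t1 = t2"
  proof (rule ccontr)
    assume ne: "t1 \<noteq> t2"
    have "(y1 - y2, a1 - a2) \<in> G"
      using norming_graphD(2)[OF G y1 norming_graphD(3)[OF G y2, of "-1"]] by simp
    then have "((1 / (t2 - t1)) *\<^sub>R (y1 - y2), (1 / (t2 - t1)) * (a1 - a2)) \<in> G"
      by (rule norming_graphD(3)[OF G])
    moreover have "y1 - y2 = (t2 - t1) *\<^sub>R x0"
      using eq by (simp add: algebra_simps)
    then have "(1 / (t2 - t1)) *\<^sub>R (y1 - y2) = x0"
      using ne by simp
    ultimately show False using x0 by (metis Domain.DomainI)
  qed
  then show "y1 = y2" using eq by simp
qed

lemma norming_graph_extend:
  assumes G: "norming_graph w G" and x0: "x0 \<notin> Domain G"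
  obtains H where "norming_graph w H" "G \<subset> H"
proof -
  note add = norming_graphD(2)[OF G] and scale = norming_graphD(3)[OF G]
  obtain c where below: "\<And>y a. (y, a) \<in> G \<Longrightarrow> a - norm (y - x0) \<le> c"
    and above: "\<And>z b. (z, b) \<in> G \<Longrightarrow> c \<le> norm (z + x0) - b"
    using norming_graph_extension_constant[OF G] by blast
  define H where "H = {(y + t *\<^sub>R x0, a + t * c) | y a t. (y, a) \<in> G}"
  have GH: "G \<subseteq> H" unfolding H_def by force
  have "(0, 0) \<in> G" using scale[OF norming_graphD(5)[OF G], of 0] by simp
  then have "(x0, c) \<in> H" unfolding H_def by force
  then have "G \<noteq> H" using x0 by auto
  have "single_valued H"
  proof (rule single_valuedI)
    fix x a b assume "(x, a) \<in> H" "(x, b) \<in> H"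
    then obtain y1 a1 t1 y2 a2 t2 where h: "(y1, a1) \<in> G" "(y2, a2) \<in> G"
      "x = y1 + t1 *\<^sub>R x0" "a = a1 + t1 * c" "x = y2 + t2 *\<^sub>R x0" "b = a2 + t2 * c"
      unfolding H_def by blast
    moreover have "y1 + t1 *\<^sub>R x0 = y2 + t2 *\<^sub>R x0" using h(3,5) by simp
    ultimately have "t1 = t2" "y1 = y2"
      using norming_graph_extension_unique[OF G x0] by blast+
    with h show "a = b" using single_valuedD[OF norming_graphD(1)[OF G]] by auto
  qed
  moreover have "(x + y, a + b) \<in> H" if xy: "(x, a) \<in> H" "(y, b) \<in> H" for x a y b
  proof -
    obtain y1 a1 t1 y2 a2 t2 where h: "(y1, a1) \<in> G" "(y2, a2) \<in> G"
      "x = y1 + t1 *\<^sub>R x0" "a = a1 + t1 * c" "y = y2 + t2 *\<^sub>R x0" "b = a2 + t2 * c"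
      using xy unfolding H_def by blast
    then have "(x + y, a + b) = ((y1 + y2) + (t1 + t2) *\<^sub>R x0, (a1 + a2) + (t1 + t2) * c)"
      by (simp add: algebra_simps)
    then show ?thesis unfolding H_def using add[OF h(1,2)] by blast
  qed
  moreover have "(r *\<^sub>R x, r * a) \<in> H" if xa: "(x, a) \<in> H" for x a r
  proof -
    obtain y1 a1 t1 where h: "(y1, a1) \<in> G" "x = y1 + t1 *\<^sub>R x0" "a = a1 + t1 * c"
      using xa unfolding H_def by blast
    then have "(r *\<^sub>R x, r * a) = (r *\<^sub>R y1 + (r * t1) *\<^sub>R x0, r * a1 + (r * t1) * c)"
      by (simp add: algebra_simps)
    then show ?thesis unfolding H_def using scale[OF h(1)] by blast
  qed
  moreover have "a \<le> norm x" if "(x, a) \<in> H" for x a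
    using that norming_graph_extension_dominated[OF G _ below above] unfolding H_def by blast
  ultimately have "norming_graph w H"
    unfolding norming_graph_def using GH norming_graphD(5)[OF G] by blast
  then show ?thesis using that GH \<open>G \<noteq> H\<close> by blast
qed

theorem exists_norming_functional:
  fixes w :: "'f::real_normed_vector"
  obtains \<psi> :: "'f \<Rightarrow> real" where "linear \<psi>" "\<And>x. \<bar>\<psi> x\<bar> \<le> norm x" "\<psi> w = norm w"
proof -
  have "\<forall>C\<in>chains {G. norming_graph w G}. \<exists>U\<in>{G. norming_graph w G}. \<forall>G\<in>C. G \<subseteq> U"
  proof
    fix C assume C: "C \<in> chains {G. norming_graph w G}"
    show "\<exists>U\<in>{G. norming_graph w G}. \<forall>G\<in>C. G \<subseteq> U"
    proof (cases "C = {}")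
      case True
      then show ?thesis using norming_graph_line[of w] by blast
    next
      case False
      then show ?thesis using norming_graph_Union_chain[OF C] by blast
    qed
  qed
  from Zorn_Lemma2[OF this] obtain M where M: "norming_graph w M"
    and max: "\<And>H. norming_graph w H \<Longrightarrow> M \<subseteq> H \<Longrightarrow> H = M"
    by blast
  have total: "x \<in> Domain M" for x
  proof (rule ccontr)
    assume "x \<notin> Domain M"
    then obtain H where "norming_graph w H" "M \<subset> H" by (rule norming_graph_extend[OF M])
    then show False using max by blast
  qed
  define \<psi> where "\<psi> x = (THE a. (x, a) \<in> M)" for x
  have graph: "(x, a) \<in> M \<longleftrightarrow> a = \<psi> x" for x a
  proof -
    obtain b where b: "(x, b) \<in> M" using total by blast
    have unique: "a' = b" if "(x, a') \<in> M" for a'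
      using single_valuedD[OF norming_graphD(1)[OF M] that b] .
    have "\<psi> x = b" unfolding \<psi>_def using b unique by (rule the_equality)
    then show ?thesis using b unique by blast
  qed
  have add: "\<psi> (x + y) = \<psi> x + \<psi> y" for x y
    using norming_graphD(2)[OF M, of x "\<psi> x" y "\<psi> y"] by (simp add: graph)
  have scale: "\<psi> (r *\<^sub>R x) = r * \<psi> x" for r x
    using norming_graphD(3)[OF M, of x "\<psi> x" r] by (simp add: graph)
  have "\<psi> x \<le> norm x" for x
    using norming_graphD(4)[OF M, of x "\<psi> x"] by (simp add: graph)
  then have "\<bar>\<psi> x\<bar> \<le> norm x" for x
    using scale[of "-1" x] by (metis abs_le_iff mult_minus1 norm_minus_cancel scaleR_minus1_left)
  moreover have "linear \<psi>" by (rule linearI) (simp_all add: add scale)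
  moreover have "\<psi> w = norm w" using norming_graphD(5)[OF M] by (simp add: graph)
  ultimately show ?thesis using that by blast
qed

section \<open>Extreme functionals of a Banach space\<close>

lemma complex_convex_combination_at_boundary:
  fixes z1 z2 :: complex
  assumes "cmod z1 \<le> m" "cmod z2 \<le> m" "0 < t" "t < 1"
    and "complex_of_real m = complex_of_real t * z1 + complex_of_real (1 - t) * z2"
  shows "z1 = complex_of_real m" "z2 = complex_of_real m"
proof -
  have on_re: "z = complex_of_real m" if "cmod z \<le> m" "Re z = m" for z
  proof -
    have "(Re z)\<^sup>2 + (Im z)\<^sup>2 \<le> m\<^sup>2"
      using that(1) norm_ge_zero power_mono unfolding cmod_power2[symmetric] by blast
    then show ?thesis using that(2) by (simp add: complex_eq_iff)
  qed
  have "Re z1 \<le> m" "Re z2 \<le> m"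
    using assms(1,2) complex_Re_le_cmod order_trans by blast+
  moreover have "m = t * Re z1 + (1 - t) * Re z2"
    using arg_cong[OF assms(5), of Re] by simp
  moreover have "0 \<le> t * (m - Re z1)" "0 \<le> (1 - t) * (m - Re z2)"
    using calculation(1,2) assms(3,4) by simp_all
  moreover have "t * (m - Re z1) + (1 - t) * (m - Re z2) = 0"
    using calculation(3) by (simp add: algebra_simps)
  ultimately have "t * (m - Re z1) = 0" "(1 - t) * (m - Re z2) = 0"
    by linarith+
  then have "Re z1 = m" "Re z2 = m"
    using assms(3,4) by simp_all
  then show "z1 = complex_of_real m" "z2 = complex_of_real m"
    using on_re assms(1,2) by blast+
qed

locale K_banach_space =
  fixes K :: "complex set" and sc :: "complex \<Rightarrow> 'f::banach \<Rightarrow> 'f"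
  assumes K_banach: "K_banach K sc" and K: "K = \<real> \<or> K = UNIV"
begin

lemma of_real_in_K: "complex_of_real r \<in> K"
  using K by auto

lemma K_mult_closed: "a \<in> K \<Longrightarrow> b \<in> K \<Longrightarrow> a * b \<in> K"
  using K by auto

lemma K_add_closed: "a \<in> K \<Longrightarrow> b \<in> K \<Longrightarrow> a + b \<in> K"
  using K by auto

lemma K_diff_closed: "a \<in> K \<Longrightarrow> b \<in> K \<Longrightarrow> a - b \<in> K"
  using K by auto

lemma K_divide_closed: "a \<in> K \<Longrightarrow> b \<in> K \<Longrightarrow> a / b \<in> K"
  using K by (metis Reals_divide UNIV_I)

lemma K_cnj_closed: "a \<in> K \<Longrightarrow> cnj a \<in> K"
  using K by (auto simp: Reals_cnj_iff)

lemma phase_in_K: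
  assumes z: "z \<in> K"
  obtains l where "l \<in> K" "cmod l \<le> 1" "l * z = complex_of_real (cmod z)"
proof (cases "z = 0")
  case True
  then show ?thesis using that[of 0] of_real_in_K[of 0] by simp
next
  case False
  let ?l = "cnj z / complex_of_real (cmod z)"
  have "cnj z * z = complex_of_real (cmod z) ^ 2"
    by (metis complex_norm_square mult.commute of_real_power)
  then have "?l * z = complex_of_real (cmod z)"
    using False by (simp add: field_simps power2_eq_square)
  moreover have "?l \<in> K" using K_divide_closed[OF K_cnj_closed[OF z] of_real_in_K] .
  ultimately show ?thesis using that False by (simp add: norm_divide)
qed

lemma sc_of_real: "sc (complex_of_real r) x = r *\<^sub>R x"
  using K_banach unfolding K_banach_def by blast

lemma sc_mult: "a \<in> K \<Longrightarrow> b \<in> K \<Longrightarrow> sc (a * b) x = sc a (sc b x)"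
  using K_banach unfolding K_banach_def by blast

lemma sc_add_scalar: "a \<in> K \<Longrightarrow> b \<in> K \<Longrightarrow> sc (a + b) x = sc a x + sc b x"
  using K_banach unfolding K_banach_def by blast

lemma sc_add: "a \<in> K \<Longrightarrow> sc a (x + y) = sc a x + sc a y"
  using K_banach unfolding K_banach_def by blast

lemma norm_sc: "a \<in> K \<Longrightarrow> norm (sc a x) = cmod a * norm x"
  using K_banach unfolding K_banach_def by blast

lemma sc_one: "sc 1 x = x"
  using sc_of_real[of 1 x] by simp

lemma sc_zero: "sc 0 x = 0"
  using sc_of_real[of 0 x] by simp

lemma sc_eq_0_iff: "a \<in> K \<Longrightarrow> sc a x = 0 \<longleftrightarrow> a = 0 \<or> x = 0"
  using norm_sc[of a x] by auto

lemma sc_scaleR: "a \<in> K \<Longrightarrow> sc a (r *\<^sub>R x) = r *\<^sub>R sc a x"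
  using sc_mult[of a "complex_of_real r" x] sc_mult[of "complex_of_real r" a x] of_real_in_K
  by (simp add: sc_of_real mult.commute)

lemma bounded_linear_sc: "a \<in> K \<Longrightarrow> bounded_linear (sc a)"
  by (rule bounded_linear_intro[of _ "cmod a"]) (simp_all add: sc_add sc_scaleR norm_sc mult.commute)

lemma sc_cancel:
  assumes "a \<in> K" "b \<in> K" "sc a w = sc b w" "w \<noteq> 0"
  shows "a = b"
proof -
  have "sc (a - b) w = 0"
    using sc_add_scalar[OF K_diff_closed[OF assms(1,2)] assms(2)] assms(3) by simp
  then show ?thesis using sc_eq_0_iff[OF K_diff_closed[OF assms(1,2)]] assms(4) by simp
qed

lemma K_dualD:
  assumes "p \<in> K_dual K sc"
  shows "p x \<in> K" "p (x + y) = p x + p y" "a \<in> K \<Longrightarrow> p (sc a x) = a * p x"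
  using assms by (simp_all add: K_dual_def)

lemma K_dualI:
  assumes "\<And>x. p x \<in> K" "\<And>x y. p (x + y) = p x + p y" "\<And>a x. a \<in> K \<Longrightarrow> p (sc a x) = a * p x"
    and "\<And>x. cmod (p x) \<le> C * norm x"
  shows "p \<in> K_dual K sc"
  using assms unfolding K_dual_def by blast

lemma K_dual_scaleR: "p \<in> K_dual K sc \<Longrightarrow> p (r *\<^sub>R x) = complex_of_real r * p x"
  using K_dualD(3)[OF _ of_real_in_K, of p r x] by (simp add: sc_of_real)

lemma K_dual_zero: "p \<in> K_dual K sc \<Longrightarrow> p 0 = 0"
  using K_dual_scaleR[of p 0 0] by simp

lemma K_dual_diff: "p \<in> K_dual K sc \<Longrightarrow> p (x - y) = p x - p y"
  using K_dualD(2)[of p "x - y" y] by simp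

lemma K_dual_ballI:
  assumes "\<And>x. p x \<in> K" "\<And>x y. p (x + y) = p x + p y" "\<And>a x. a \<in> K \<Longrightarrow> p (sc a x) = a * p x"
    and "\<And>x. cmod (p x) \<le> norm x"
  shows "p \<in> K_dual_ball K sc"
  using assms K_dualI[of p 1] unfolding K_dual_ball_def by simp

lemma K_dual_ballD:
  assumes "p \<in> K_dual_ball K sc"
  shows "p \<in> K_dual K sc" "cmod (p x) \<le> norm x"
  using assms by (simp_all add: K_dual_ball_def)

lemma ExtD:
  assumes "p \<in> Ext K sc"
  shows "p \<in> K_dual_ball K sc" "p \<in> K_dual K sc"
  using assms K_dual_ballD(1) by (simp_all add: Ext_def)

lemma Ext_convex_combinationD:
  assumes "p \<in> Ext K sc" "q \<in> K_dual_ball K sc" "r \<in> K_dual_ball K sc" "0 < t" "t < 1"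
    and "p = (\<lambda>x. complex_of_real t * q x + complex_of_real (1 - t) * r x)"
  shows "q = r"
proof -
  have "\<forall>q\<in>K_dual_ball K sc. \<forall>r\<in>K_dual_ball K sc. \<forall>t::real. 0 < t \<and> t < 1 \<and>
          p = (\<lambda>x. complex_of_real t * q x + complex_of_real (1 - t) * r x) \<longrightarrow> q = r"
    using assms(1) unfolding Ext_def by blast
  then show ?thesis using assms(2-6) by blast
qed

lemma Ext_norming:
  assumes p: "p \<in> Ext K sc" and pw: "p w \<noteq> 0" and e: "\<epsilon> > 0"
  obtains v where "norm v \<le> 1" "cmod (p v) > 1 - \<epsilon>"
proof -
  define e where "e = min \<epsilon> (1 / 2)"
  have e0: "0 < e" "e < 1" using e e_def by auto
  have D: "p \<in> K_dual K sc" using ExtD[OF p] by blast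
  have nz: "complex_of_real (1 - e) \<noteq> 0" using e0 by simp
  have "\<exists>v. norm v \<le> 1 \<and> cmod (p v) > 1 - \<epsilon>"
  proof (rule ccontr)
    assume none: "\<nexists>v. norm v \<le> 1 \<and> cmod (p v) > 1 - \<epsilon>"
    have unit: "cmod (p v) \<le> 1 - e" if "norm v \<le> 1" for v
      using none that e_def by fastforce
    have bound: "cmod (p v) \<le> (1 - e) * norm v" for v
    proof (cases "v = 0")
      case False
      have "cmod (p ((1 / norm v) *\<^sub>R v)) \<le> 1 - e" using unit False by simp
      then have "cmod (p v) / norm v \<le> 1 - e"
        by (simp add: K_dual_scaleR[OF D] norm_divide)
      then show ?thesis using False by (simp add: divide_le_eq mult.commute)
    qed (simp add: K_dual_zero[OF D])
    define q where "q x = p x / complex_of_real (1 - e)" for x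
    have q: "q \<in> K_dual_ball K sc"
    proof (rule K_dual_ballI)
      show "q x \<in> K" for x unfolding q_def using K_divide_closed[OF K_dualD(1)[OF D] of_real_in_K] .
      show "q (x + y) = q x + q y" for x y unfolding q_def using K_dualD(2)[OF D] by (simp add: add_divide_distrib)
      show "q (sc a x) = a * q x" if "a \<in> K" for a x unfolding q_def using K_dualD(3)[OF D that] by simp
      show "cmod (q x) \<le> norm x" for x
        using bound[of x] e0 unfolding q_def by (simp add: norm_divide divide_le_eq mult.commute del: of_real_diff)
    qed
    have zero: "(\<lambda>x. 0) \<in> K_dual_ball K sc"
      by (rule K_dual_ballI) (auto simp: of_real_in_K[of 0, simplified])
    have "p = (\<lambda>x. complex_of_real (1 - e) * q x + complex_of_real (1 - (1 - e)) * 0)"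
      using nz unfolding q_def by (simp del: of_real_diff)
    then have "q = (\<lambda>x. 0)"
      using Ext_convex_combinationD[OF p q zero, of "1 - e"] e0 by simp
    then show False using pw nz unfolding q_def by (metis divide_eq_0_iff)
  qed
  then show ?thesis using that by blast
qed

lemma K_dual_of_real_functional:
  assumes KR: "K = \<real>" and lin: "linear \<psi>" and bound: "\<And>x. \<bar>\<psi> x\<bar> \<le> norm x"
  shows "(\<lambda>x. complex_of_real (\<psi> x)) \<in> K_dual K sc"
proof (rule K_dualI)
  show "complex_of_real (\<psi> x) \<in> K" for x unfolding KR by simp
  show "complex_of_real (\<psi> (x + y)) = complex_of_real (\<psi> x) + complex_of_real (\<psi> y)" for x y
    by (simp add: linear_add[OF lin])
  show "complex_of_real (\<psi> (sc a x)) = a * complex_of_real (\<psi> x)" if "a \<in> K" for a x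
    using that KR by (auto elim!: Reals_cases simp: sc_of_real linear_scale[OF lin])
  show "cmod (complex_of_real (\<psi> x)) \<le> 1 * norm x" for x using bound[of x] by simp
qed

text \<open>The bound \<open>2\<parallel>x\<parallel>\<close> obtained for the complexification is not sharp, but boundedness is
  all that is needed.\<close>

lemma K_dual_complexification:
  assumes KU: "K = UNIV" and lin: "linear \<psi>" and bound: "\<And>x. \<bar>\<psi> x\<bar> \<le> norm x"
  shows "(\<lambda>x. complex_of_real (\<psi> x) - \<i> * complex_of_real (\<psi> (sc \<i> x))) \<in> K_dual K sc"
proof (rule K_dualI)
  note \<psi>_add = linear_add[OF lin] and \<psi>_scale = linear_scale[OF lin]
  have ii: "sc \<i> (sc \<i> x) = - x" for x
    using sc_mult[of \<i> \<i> x] sc_of_real[of "-1" x] KU by simp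
  have sc_decomp: "sc a x = Re a *\<^sub>R x + sc \<i> (Im a *\<^sub>R x)" for a x
  proof -
    have "a = complex_of_real (Re a) + \<i> * complex_of_real (Im a)"
      by (simp add: complex_eq_iff)
    then have "sc a x = sc (complex_of_real (Re a) + \<i> * complex_of_real (Im a)) x"
      by simp
    then show ?thesis using sc_add_scalar sc_mult sc_of_real KU by simp
  qed
  show "complex_of_real (\<psi> x) - \<i> * complex_of_real (\<psi> (sc \<i> x)) \<in> K" for x using KU by simp
  show "complex_of_real (\<psi> (x + y)) - \<i> * complex_of_real (\<psi> (sc \<i> (x + y))) =
      complex_of_real (\<psi> x) - \<i> * complex_of_real (\<psi> (sc \<i> x)) +
      (complex_of_real (\<psi> y) - \<i> * complex_of_real (\<psi> (sc \<i> y)))" for x y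
  proof -
    have "sc \<i> (x + y) = sc \<i> x + sc \<i> y" using sc_add KU by simp
    then show ?thesis by (simp add: \<psi>_add algebra_simps)
  qed
  show "complex_of_real (\<psi> (sc a x)) - \<i> * complex_of_real (\<psi> (sc \<i> (sc a x))) =
      a * (complex_of_real (\<psi> x) - \<i> * complex_of_real (\<psi> (sc \<i> x)))" for a x
  proof -
    have "sc \<i> (sc a x) = Re a *\<^sub>R sc \<i> x - Im a *\<^sub>R x"
      unfolding sc_decomp[of a x] using sc_add sc_scaleR ii KU by simp
    then have "\<psi> (sc \<i> (sc a x)) = Re a * \<psi> (sc \<i> x) - Im a * \<psi> x"
      by (simp add: linear_diff[OF lin] \<psi>_scale)
    moreover have "\<psi> (sc a x) = Re a * \<psi> x + Im a * \<psi> (sc \<i> x)"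
      unfolding sc_decomp[of a x] using sc_scaleR KU by (simp add: \<psi>_add \<psi>_scale)
    ultimately show ?thesis by (simp add: algebra_simps complex_eq_iff)
  qed
  show "cmod (complex_of_real (\<psi> x) - \<i> * complex_of_real (\<psi> (sc \<i> x))) \<le> 2 * norm x" for x
  proof -
    have "cmod (complex_of_real (\<psi> x) - \<i> * complex_of_real (\<psi> (sc \<i> x)))
        \<le> cmod (complex_of_real (\<psi> x)) + cmod (\<i> * complex_of_real (\<psi> (sc \<i> x)))"
      by (rule norm_triangle_ineq4)
    also have "\<dots> = \<bar>\<psi> x\<bar> + \<bar>\<psi> (sc \<i> x)\<bar>" by (simp add: norm_mult)
    also have "\<dots> \<le> norm x + norm (sc \<i> x)" by (intro add_mono bound)
    finally show ?thesis using norm_sc[of \<i> x] KU by simp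
  qed
qed

lemma exists_K_dual_nonzero:
  assumes w: "w \<noteq> 0"
  obtains \<phi> where "\<phi> \<in> K_dual K sc" "\<phi> w \<noteq> 0"
proof -
  obtain \<psi> where lin: "linear \<psi>" and bound: "\<And>x. \<bar>\<psi> x\<bar> \<le> norm x" and \<psi>w: "\<psi> w = norm w"
    using exists_norming_functional by blast
  consider "K = \<real>" | "K = UNIV" using K by blast
  then show ?thesis
  proof cases
    case 1
    then show ?thesis using that[OF K_dual_of_real_functional[OF 1 lin bound]] \<psi>w w by simp
  next
    case 2
    have "Re (complex_of_real (\<psi> w) - \<i> * complex_of_real (\<psi> (sc \<i> w))) \<noteq> 0"
      using \<psi>w w by simp
    then show ?thesis using that[OF K_dual_complexification[OF 2 lin bound]] by force
  qed
qed

text \<open>The rank-one operator \<open>x \<mapsto> \<phi>(x) w\<close> is a multiplier with coefficient 0 whenever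
  every extreme functional vanishes at \<open>w\<close>; one-dimensionality of the centralizer then forces
  the whole space to be the line through \<open>w\<close>.\<close>

lemma centralizer_one_dim_Ext_annihilator:
  assumes Z: "centralizer_one_dim K sc" and w: "w \<noteq> 0" and vanish: "\<forall>p\<in>Ext K sc. p w = 0"
  shows "\<exists>k\<in>K. x = sc k w"
proof -
  obtain \<phi> where \<phi>: "\<phi> \<in> K_dual K sc" and \<phi>w: "\<phi> w \<noteq> 0"
    using exists_K_dual_nonzero[OF w] by blast
  obtain C where C: "\<And>x. cmod (\<phi> x) \<le> C * norm x"
    using \<phi> unfolding K_dual_def by blast
  define U where "U x = sc (\<phi> x) w" for x
  have "multiplier_with K sc U (\<lambda>p. 0)"
    unfolding multiplier_with_def K_cont_linear_def
  proof (intro conjI allI ballI)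
    show "U (x + y) = U x + U y" for x y
      unfolding U_def K_dualD(2)[OF \<phi>] using sc_add_scalar[OF K_dualD(1)[OF \<phi>] K_dualD(1)[OF \<phi>]] .
    show "U (sc a x) = sc a (U x)" if "a \<in> K" for a x
      unfolding U_def K_dualD(3)[OF \<phi> that] using sc_mult[OF that K_dualD(1)[OF \<phi>]] .
    have "norm (U x) \<le> (C * norm w) * norm x" for x
      unfolding U_def norm_sc[OF K_dualD(1)[OF \<phi>]]
      using mult_left_mono[OF C[of x] norm_ge_zero[of w]] by (simp add: algebra_simps)
    then show "\<exists>C. \<forall>x. norm (U x) \<le> C * norm x" by blast
    show "(0::complex) \<in> K" using of_real_in_K[of 0] by simp
    show "p \<circ> U = (\<lambda>x. 0 * p x)" if "p \<in> Ext K sc" for p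
      using that vanish K_dualD(3)[OF ExtD(2)[OF that] K_dualD(1)[OF \<phi>]] by (auto simp: U_def)
  qed
  then have "U \<in> centralizer K sc" unfolding centralizer_def by fastforce
  then obtain c where c: "c \<in> K" and U_eq: "U = sc c"
    using Z unfolding centralizer_one_dim_def by blast
  have Uc: "sc (\<phi> x) w = sc c x" for x
    using fun_cong[OF U_eq, of x] unfolding U_def .
  have "c \<noteq> 0" using Uc[of w] \<phi>w w sc_eq_0_iff[OF K_dualD(1)[OF \<phi>]] sc_zero by metis
  then have "x = sc (1 / c) (sc c x)"
    using sc_mult[OF K_divide_closed[OF of_real_in_K[of 1] c] c] sc_one by simp
  also have "\<dots> = sc (\<phi> x / c) w"
    unfolding Uc[symmetric] using sc_mult[OF K_divide_closed[OF of_real_in_K[of 1] c] K_dualD(1)[OF \<phi>]] by simp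
  finally show ?thesis using K_divide_closed[OF K_dualD(1)[OF \<phi>] c] by blast
qed

lemma Ext_nonzero_on_line:
  assumes w: "w \<noteq> 0" and line: "\<And>x. \<exists>k\<in>K. x = sc k w"
  obtains p where "p \<in> Ext K sc" "p w \<noteq> 0"
proof -
  define l where "l x = (THE k. k \<in> K \<and> x = sc k w)" for x
  have l_eq: "l x = k" if k: "k \<in> K" "x = sc k w" for x k
    unfolding l_def
  proof (rule the_equality)
    show "k' = k" if "k' \<in> K \<and> x = sc k' w" for k'
      using sc_cancel[OF _ k(1) _ w] that k(2) by blast
  qed (use k in blast)
  have l: "l x \<in> K" "x = sc (l x) w" for x
    using line[of x] l_eq by auto
  define p where "p x = l x * complex_of_real (norm w)" for x
  have norm_p: "cmod (p x) = norm x" for x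
    using norm_sc[OF l(1), of x w] l(2)[of x] by (simp add: p_def norm_mult)
  have "p \<in> K_dual_ball K sc"
  proof (rule K_dual_ballI)
    show "p x \<in> K" for x unfolding p_def using K_mult_closed[OF l(1) of_real_in_K] .
    show "p (x + y) = p x + p y" for x y
      using l_eq[OF K_add_closed[OF l(1) l(1)], of "x + y" x y] l(2) sc_add_scalar[OF l(1) l(1)]
      by (simp add: p_def algebra_simps)
    show "p (sc a x) = a * p x" if "a \<in> K" for a x
      using l_eq[OF K_mult_closed[OF that l(1)], of "sc a x" x] l(2)[of x] sc_mult[OF that l(1)]
      by (simp add: p_def)
  qed (use norm_p in simp)
  moreover have "q = r"
    if q: "q \<in> K_dual_ball K sc" and r: "r \<in> K_dual_ball K sc" and t: "0 < t" "t < 1"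
      and comb: "p = (\<lambda>x. complex_of_real t * q x + complex_of_real (1 - t) * r x)" for q r t
  proof -
    have "p w = complex_of_real (norm w)" using l_eq[of 1 w] of_real_in_K[of 1] sc_one by (simp add: p_def)
    then have "q w = r w"
      using complex_convex_combination_at_boundary[OF K_dual_ballD(2)[OF q] K_dual_ballD(2)[OF r] t]
        fun_cong[OF comb, of w] by metis
    then show "q = r"
      using K_dualD(3)[OF K_dual_ballD(1)[OF q] l(1)] K_dualD(3)[OF K_dual_ballD(1)[OF r] l(1)] l(2)
      by (metis ext)
  qed
  ultimately have "p \<in> Ext K sc" unfolding Ext_def by blast
  moreover have "p w \<noteq> 0" using norm_p[of w] w by auto
  ultimately show ?thesis using that by blast
qed

lemma Ext_separates_points:
  assumes "centralizer_one_dim K sc" "w \<noteq> 0"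
  obtains p where "p \<in> Ext K sc" "p w \<noteq> 0"
  using centralizer_one_dim_Ext_annihilator[OF assms] Ext_nonzero_on_line[OF assms(2)] by blast

end

section \<open>Extreme functionals of function spaces\<close>

lemma supnorm_le:
  assumes "\<And>y. y \<in> topspace Y \<Longrightarrow> norm (u y) \<le> c" "0 \<le> c"
  shows "supnorm Y u \<le> c"
  unfolding supnorm_def using assms by (intro cSup_least) auto

lemma bdd_above_supnorm_set:
  assumes "bounded (u ` topspace Y)"
  shows "bdd_above (insert 0 ((\<lambda>y. norm (u y)) ` topspace Y))"
proof -
  obtain C where "\<forall>y\<in>topspace Y. norm (u y) \<le> C" using assms unfolding bounded_iff by auto
  then show ?thesis by (intro bdd_aboveI[of _ "max 0 C"]) (auto simp: le_max_iff_disj)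
qed

lemma supnorm_upper:
  assumes "bounded (u ` topspace Y)" "y \<in> topspace Y"
  shows "norm (u y) \<le> supnorm Y u"
  unfolding supnorm_def using assms by (intro cSup_upper bdd_above_supnorm_set) auto

lemma supnorm_nonneg:
  assumes "bounded (u ` topspace Y)"
  shows "0 \<le> supnorm Y u"
  unfolding supnorm_def using assms by (intro cSup_upper bdd_above_supnorm_set) auto

lemma norm_bump_complement_le:
  fixes v :: "'a::real_normed_vector"
  assumes n: "n > 0"
  shows "norm ((1 - min 1 (n * norm v)) *\<^sub>R v) \<le> 1 / n"
proof (cases "n * norm v \<ge> 1")
  case False
  then have "norm v < 1 / n" using n by (simp add: field_simps)
  moreover have "(1 - n * norm v) * norm v \<le> norm v" using n by (simp add: algebra_simps)
  ultimately show ?thesis using False by simp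
qed (use n in simp)

definition unit_multipliers :: "('y \<Rightarrow> 'f::real_normed_vector) set \<Rightarrow> ('y \<Rightarrow> real) set" where
  "unit_multipliers B = {h. (\<forall>y. 0 \<le> h y \<and> h y \<le> 1) \<and> (\<forall>u\<in>B. (\<lambda>y. h y *\<^sub>R u y) \<in> B)}"

definition const_on :: "'y topology \<Rightarrow> 'f::zero \<Rightarrow> 'y \<Rightarrow> 'f" where
  "const_on Y c = (\<lambda>y. if y \<in> topspace Y then c else 0)"

definition K_linear_on :: "complex set \<Rightarrow> (complex \<Rightarrow> 'f \<Rightarrow> 'f) \<Rightarrow> ('y \<Rightarrow> 'f::real_normed_vector) set \<Rightarrow>
    (('y \<Rightarrow> 'f) \<Rightarrow> complex) \<Rightarrow> bool" where
  "K_linear_on K sc B \<Psi> \<longleftrightarrow> (\<forall>u\<in>B. \<forall>v\<in>B. \<Psi> (\<lambda>y. u y + v y) = \<Psi> u + \<Psi> v) \<and>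
     (\<forall>a\<in>K. \<forall>u\<in>B. \<Psi> (\<lambda>y. sc a (u y)) = a * \<Psi> u)"

definition K_dual_ball_on :: "complex set \<Rightarrow> (complex \<Rightarrow> 'f \<Rightarrow> 'f) \<Rightarrow> 'y topology \<Rightarrow>
    ('y \<Rightarrow> 'f::real_normed_vector) set \<Rightarrow> (('y \<Rightarrow> 'f) \<Rightarrow> complex) set" where
  "K_dual_ball_on K sc Y B =
     {\<Psi>. K_linear_on K sc B \<Psi> \<and> (\<forall>u\<in>B. \<Psi> u \<in> K) \<and> (\<forall>u\<in>B. cmod (\<Psi> u) \<le> supnorm Y u)}"

text \<open>Functionals on \<open>B\<close> are arbitrary outside \<open>B\<close>, so extremality only compares them on \<open>B\<close>.\<close>

definition Ext_on :: "complex set \<Rightarrow> (complex \<Rightarrow> 'f \<Rightarrow> 'f) \<Rightarrow> 'y topology \<Rightarrow>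
    ('y \<Rightarrow> 'f::real_normed_vector) set \<Rightarrow> (('y \<Rightarrow> 'f) \<Rightarrow> complex) set" where
  "Ext_on K sc Y B = {\<Phi> \<in> K_dual_ball_on K sc Y B.
     \<forall>\<Psi>1\<in>K_dual_ball_on K sc Y B. \<forall>\<Psi>2\<in>K_dual_ball_on K sc Y B. \<forall>t::real.
       0 < t \<and> t < 1 \<and> (\<forall>u\<in>B. \<Phi> u = complex_of_real t * \<Psi>1 u + complex_of_real (1 - t) * \<Psi>2 u)
       \<longrightarrow> (\<forall>u\<in>B. \<Psi>1 u = \<Psi>2 u)}"

lemma K_linear_onD:
  assumes "K_linear_on K sc B \<Psi>"
  shows "u \<in> B \<Longrightarrow> v \<in> B \<Longrightarrow> \<Psi> (\<lambda>y. u y + v y) = \<Psi> u + \<Psi> v"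
    and "a \<in> K \<Longrightarrow> u \<in> B \<Longrightarrow> \<Psi> (\<lambda>y. sc a (u y)) = a * \<Psi> u"
  using assms unfolding K_linear_on_def by blast+

lemma K_dual_ball_onD:
  assumes "\<Psi> \<in> K_dual_ball_on K sc Y B"
  shows "K_linear_on K sc B \<Psi>" "u \<in> B \<Longrightarrow> \<Psi> u \<in> K" "u \<in> B \<Longrightarrow> cmod (\<Psi> u) \<le> supnorm Y u"
  using assms unfolding K_dual_ball_on_def by blast+

lemma Ext_onD: "\<Phi> \<in> Ext_on K sc Y B \<Longrightarrow> \<Phi> \<in> K_dual_ball_on K sc Y B"
  unfolding Ext_on_def by blast

lemma Ext_on_convex_combinationD:
  assumes "\<Phi> \<in> Ext_on K sc Y B" "\<Psi>1 \<in> K_dual_ball_on K sc Y B" "\<Psi>2 \<in> K_dual_ball_on K sc Y B"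
    and "0 < t" "t < 1"
    and "\<And>u. u \<in> B \<Longrightarrow> \<Phi> u = complex_of_real t * \<Psi>1 u + complex_of_real (1 - t) * \<Psi>2 u"
    and "u \<in> B"
  shows "\<Psi>1 u = \<Psi>2 u"
proof -
  have "\<forall>\<Psi>1\<in>K_dual_ball_on K sc Y B. \<forall>\<Psi>2\<in>K_dual_ball_on K sc Y B. \<forall>t::real.
      0 < t \<and> t < 1 \<and> (\<forall>u\<in>B. \<Phi> u = complex_of_real t * \<Psi>1 u + complex_of_real (1 - t) * \<Psi>2 u)
      \<longrightarrow> (\<forall>u\<in>B. \<Psi>1 u = \<Psi>2 u)"
    using assms(1) unfolding Ext_on_def by blast
  then show ?thesis using assms(2-7) by blast
qed

lemma Ext_onI:
  assumes "\<Phi> \<in> K_dual_ball_on K sc Y B"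
    and "\<And>\<Psi>1 \<Psi>2 t u. \<Psi>1 \<in> K_dual_ball_on K sc Y B \<Longrightarrow> \<Psi>2 \<in> K_dual_ball_on K sc Y B \<Longrightarrow>
      0 < t \<Longrightarrow> t < 1 \<Longrightarrow>
      (\<And>v. v \<in> B \<Longrightarrow> \<Phi> v = complex_of_real t * \<Psi>1 v + complex_of_real (1 - t) * \<Psi>2 v) \<Longrightarrow>
      u \<in> B \<Longrightarrow> \<Psi>1 u = \<Psi>2 u"
  shows "\<Phi> \<in> Ext_on K sc Y B"
  using assms unfolding Ext_on_def by blast

locale function_space = K_banach_space K sc for K :: "complex set" and sc :: "complex \<Rightarrow> 'f::banach \<Rightarrow> 'f" +
  fixes Y :: "'y topology" and B :: "('y \<Rightarrow> 'f) set"
  assumes bounded_image: "u \<in> B \<Longrightarrow> bounded (u ` topspace Y)"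
    and vanishes_outside: "u \<in> B \<Longrightarrow> y \<notin> topspace Y \<Longrightarrow> u y = 0"
    and add_closed: "u \<in> B \<Longrightarrow> v \<in> B \<Longrightarrow> (\<lambda>y. u y + v y) \<in> B"
    and sc_closed: "a \<in> K \<Longrightarrow> u \<in> B \<Longrightarrow> (\<lambda>y. sc a (u y)) \<in> B"
    and const_closed: "const_on Y c \<in> B"
    and bump_multiplier: "u \<in> B \<Longrightarrow> n > 0 \<Longrightarrow> (\<lambda>y. min 1 (n * norm (u y))) \<in> unit_multipliers B"
begin

lemma zero_closed: "(\<lambda>y. 0) \<in> B"
  using const_closed[of 0] unfolding const_on_def by (simp add: if_distrib cong: if_cong)

lemma scaleR_closed: "u \<in> B \<Longrightarrow> (\<lambda>y. r *\<^sub>R u y) \<in> B"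
  using sc_closed[OF of_real_in_K, of u r] by (simp add: sc_of_real)

lemma diff_closed: "u \<in> B \<Longrightarrow> v \<in> B \<Longrightarrow> (\<lambda>y. u y - v y) \<in> B"
  using add_closed[OF _ scaleR_closed[of v "-1"], of u] by simp

lemma multiplier_closed: "h \<in> unit_multipliers B \<Longrightarrow> u \<in> B \<Longrightarrow> (\<lambda>y. h y *\<^sub>R u y) \<in> B"
  unfolding unit_multipliers_def by blast

lemma unit_multiplier_bounds: "h \<in> unit_multipliers B \<Longrightarrow> 0 \<le> h y \<and> h y \<le> 1"
  unfolding unit_multipliers_def by blast

lemma unit_multiplier_complement:
  assumes h: "h \<in> unit_multipliers B"
  shows "(\<lambda>y. 1 - h y) \<in> unit_multipliers B"
proof -
  have "(\<lambda>y. (1 - h y) *\<^sub>R u y) \<in> B" if "u \<in> B" for u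
  proof -
    have "(\<lambda>y. (1 - h y) *\<^sub>R u y) = (\<lambda>y. u y - h y *\<^sub>R u y)" by (simp add: fun_eq_iff scaleR_diff_left)
    then show ?thesis using diff_closed[OF that multiplier_closed[OF h that]] by simp
  qed
  moreover have "0 \<le> 1 - h y \<and> 1 - h y \<le> 1" for y using unit_multiplier_bounds[OF h, of y] by simp
  ultimately show ?thesis unfolding unit_multipliers_def by blast
qed

lemma supnorm_upper_on: "u \<in> B \<Longrightarrow> y \<in> topspace Y \<Longrightarrow> norm (u y) \<le> supnorm Y u"
  by (rule supnorm_upper[OF bounded_image])

lemma supnorm_nonneg_on: "u \<in> B \<Longrightarrow> 0 \<le> supnorm Y u"
  by (rule supnorm_nonneg[OF bounded_image])

lemma supnorm_eq_0_imp:
  assumes u: "u \<in> B" and "supnorm Y u \<le> 0"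
  shows "u = (\<lambda>y. 0)"
proof
  fix y show "u y = 0"
  proof (cases "y \<in> topspace Y")
    case True
    then show ?thesis using supnorm_upper_on[OF u True] assms(2) by (meson norm_le_zero_iff order.trans)
  qed (rule vanishes_outside[OF u])
qed

lemma supnorm_multiplier_le:
  assumes h: "h \<in> unit_multipliers B" and u: "u \<in> B"
  shows "supnorm Y (\<lambda>y. h y *\<^sub>R u y) \<le> supnorm Y u"
proof (rule supnorm_le)
  fix y assume "y \<in> topspace Y"
  then have "norm (u y) \<le> supnorm Y u" by (rule supnorm_upper_on[OF u])
  moreover have "norm (h y *\<^sub>R u y) \<le> norm (u y)"
    using unit_multiplier_bounds[OF h, of y] by (simp add: mult_left_le_one_le)
  ultimately show "norm (h y *\<^sub>R u y) \<le> supnorm Y u" by (rule order_trans[rotated])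
qed (rule supnorm_nonneg_on[OF u])

lemma supnorm_const_on: "supnorm Y (const_on Y c) \<le> norm c"
  by (rule supnorm_le) (auto simp: const_on_def)

lemma K_linear_on_scaleR:
  assumes "K_linear_on K sc B \<Psi>" "u \<in> B"
  shows "\<Psi> (\<lambda>y. r *\<^sub>R u y) = complex_of_real r * \<Psi> u"
  using K_linear_onD(2)[OF assms(1) of_real_in_K assms(2)] by (simp add: sc_of_real)

lemma K_linear_on_zero: "K_linear_on K sc B \<Psi> \<Longrightarrow> \<Psi> (\<lambda>y. 0) = 0"
  using K_linear_on_scaleR[OF _ zero_closed, of \<Psi> 0] by simp

lemma K_linear_on_diff:
  assumes "K_linear_on K sc B \<Psi>" "u \<in> B" "v \<in> B"
  shows "\<Psi> (\<lambda>y. u y - v y) = \<Psi> u - \<Psi> v"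
  using K_linear_onD(1)[OF assms(1) diff_closed[OF assms(2,3)] assms(3)] by simp

lemma K_linear_on_bound:
  assumes lin: "K_linear_on K sc B \<Psi>" and c: "0 \<le> c"
    and unit: "\<And>u. u \<in> B \<Longrightarrow> supnorm Y u \<le> 1 \<Longrightarrow> cmod (\<Psi> u) \<le> c" and u: "u \<in> B"
  shows "cmod (\<Psi> u) \<le> c * supnorm Y u"
proof (cases "supnorm Y u \<le> 0")
  case True
  then show ?thesis using supnorm_eq_0_imp[OF u] K_linear_on_zero[OF lin] supnorm_nonneg_on[OF u] c by simp
next
  case False
  define s where "s = supnorm Y u"
  have s: "s > 0" using False s_def by simp
  have "supnorm Y (\<lambda>y. (1 / s) *\<^sub>R u y) \<le> 1"
  proof (rule supnorm_le)
    fix y assume "y \<in> topspace Y"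
    then have "norm (u y) \<le> s" using supnorm_upper_on[OF u] s_def by simp
    then show "norm ((1 / s) *\<^sub>R u y) \<le> 1" using s by (simp add: divide_le_eq_1)
  qed simp
  then have "cmod (\<Psi> (\<lambda>y. (1 / s) *\<^sub>R u y)) \<le> c" using unit scaleR_closed[OF u] by blast
  then have "cmod (\<Psi> u) / s \<le> c" using s K_linear_on_scaleR[OF lin u] by (simp add: norm_mult norm_divide)
  then show ?thesis using s s_def by (simp add: divide_le_eq mult.commute)
qed

lemma K_linear_on_multiplier:
  assumes lin: "K_linear_on K sc B \<Psi>" and h: "h \<in> unit_multipliers B"
  shows "K_linear_on K sc B (\<lambda>u. \<Psi> (\<lambda>y. h y *\<^sub>R u y))"
  unfolding K_linear_on_def
proof (intro conjI ballI)
  fix u v assume u: "u \<in> B" and v: "v \<in> B"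
  have "(\<lambda>y. h y *\<^sub>R (u y + v y)) = (\<lambda>y. h y *\<^sub>R u y + h y *\<^sub>R v y)"
    by (simp add: scaleR_right_distrib)
  then show "\<Psi> (\<lambda>y. h y *\<^sub>R (u y + v y)) = \<Psi> (\<lambda>y. h y *\<^sub>R u y) + \<Psi> (\<lambda>y. h y *\<^sub>R v y)"
    using K_linear_onD(1)[OF lin multiplier_closed[OF h u] multiplier_closed[OF h v]] by simp
next
  fix a u assume a: "a \<in> K" and u: "u \<in> B"
  have "(\<lambda>y. h y *\<^sub>R sc a (u y)) = (\<lambda>y. sc a (h y *\<^sub>R u y))" using sc_scaleR[OF a] by simp
  then show "\<Psi> (\<lambda>y. h y *\<^sub>R sc a (u y)) = a * \<Psi> (\<lambda>y. h y *\<^sub>R u y)"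
    using K_linear_onD(2)[OF lin a multiplier_closed[OF h u]] by simp
qed

lemma K_linear_on_split:
  assumes lin: "K_linear_on K sc B \<Psi>" and h: "h \<in> unit_multipliers B" and u: "u \<in> B"
  shows "\<Psi> u = \<Psi> (\<lambda>y. h y *\<^sub>R u y) + \<Psi> (\<lambda>y. (1 - h y) *\<^sub>R u y)"
proof -
  have "(\<lambda>y. h y *\<^sub>R u y + (1 - h y) *\<^sub>R u y) = u" by (simp add: fun_eq_iff scaleR_diff_left)
  then show ?thesis
    using K_linear_onD(1)[OF lin multiplier_closed[OF h u] multiplier_closed[OF unit_multiplier_complement[OF h] u]]
    by simp
qed

text \<open>Rotating \<open>u\<^sub>1\<close> and \<open>u\<^sub>2\<close> so that both values become nonnegative and gluing them with
  \<open>h\<close> and \<open>1 - h\<close> gives a single function of norm at most 1.\<close>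

lemma K_dual_ball_on_split_le_1:
  assumes P: "\<Psi> \<in> K_dual_ball_on K sc Y B" and h: "h \<in> unit_multipliers B"
    and u1: "u1 \<in> B" "supnorm Y u1 \<le> 1" and u2: "u2 \<in> B" "supnorm Y u2 \<le> 1"
  shows "cmod (\<Psi> (\<lambda>y. h y *\<^sub>R u1 y)) + cmod (\<Psi> (\<lambda>y. (1 - h y) *\<^sub>R u2 y)) \<le> 1"
proof -
  note lin = K_dual_ball_onD(1)[OF P]
  have h': "(\<lambda>y. 1 - h y) \<in> unit_multipliers B" using unit_multiplier_complement[OF h] .
  let ?z1 = "\<Psi> (\<lambda>y. h y *\<^sub>R u1 y)" and ?z2 = "\<Psi> (\<lambda>y. (1 - h y) *\<^sub>R u2 y)"
  obtain l1 where l1: "l1 \<in> K" "cmod l1 \<le> 1" "l1 * ?z1 = complex_of_real (cmod ?z1)"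
    using phase_in_K[OF K_dual_ball_onD(2)[OF P multiplier_closed[OF h u1(1)]]] .
  obtain l2 where l2: "l2 \<in> K" "cmod l2 \<le> 1" "l2 * ?z2 = complex_of_real (cmod ?z2)"
    using phase_in_K[OF K_dual_ball_onD(2)[OF P multiplier_closed[OF h' u2(1)]]] .
  define v1 where "v1 = (\<lambda>y. sc l1 (u1 y))"
  define v2 where "v2 = (\<lambda>y. sc l2 (u2 y))"
  have v1: "v1 \<in> B" unfolding v1_def using sc_closed[OF l1(1) u1(1)] .
  have v2: "v2 \<in> B" unfolding v2_def using sc_closed[OF l2(1) u2(1)] .
  define w where "w = (\<lambda>y. h y *\<^sub>R v1 y + (1 - h y) *\<^sub>R v2 y)"
  have "\<Psi> w = \<Psi> (\<lambda>y. h y *\<^sub>R v1 y) + \<Psi> (\<lambda>y. (1 - h y) *\<^sub>R v2 y)"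
    unfolding w_def using K_linear_onD(1)[OF lin multiplier_closed[OF h v1] multiplier_closed[OF h' v2]] .
  also have "\<Psi> (\<lambda>y. h y *\<^sub>R v1 y) = l1 * ?z1"
    unfolding v1_def using K_linear_onD(2)[OF K_linear_on_multiplier[OF lin h] l1(1) u1(1)] .
  also have "\<Psi> (\<lambda>y. (1 - h y) *\<^sub>R v2 y) = l2 * ?z2"
    unfolding v2_def using K_linear_onD(2)[OF K_linear_on_multiplier[OF lin h'] l2(1) u2(1)] .
  finally have "cmod (\<Psi> w) = cmod ?z1 + cmod ?z2"
    using l1(3) l2(3) by (simp flip: of_real_add)
  moreover have "supnorm Y w \<le> 1"
    unfolding w_def
  proof (rule supnorm_le)
    fix y assume y: "y \<in> topspace Y"
    have hy: "0 \<le> h y" "h y \<le> 1" using unit_multiplier_bounds[OF h] by auto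
    have "norm (v1 y) \<le> 1" "norm (v2 y) \<le> 1"
      using supnorm_upper_on[OF u1(1) y] supnorm_upper_on[OF u2(1) y] u1(2) u2(2) l1(2) l2(2)
      by (auto simp: v1_def v2_def norm_sc[OF l1(1)] norm_sc[OF l2(1)] intro: mult_le_one)
    then have "h y * norm (v1 y) + (1 - h y) * norm (v2 y) \<le> h y * 1 + (1 - h y) * 1"
      using hy by (intro add_mono mult_left_mono) simp_all
    moreover have "norm (h y *\<^sub>R v1 y + (1 - h y) *\<^sub>R v2 y) \<le> h y * norm (v1 y) + (1 - h y) * norm (v2 y)"
      using norm_triangle_ineq[of "h y *\<^sub>R v1 y" "(1 - h y) *\<^sub>R v2 y"] hy by simp
    ultimately show "norm (h y *\<^sub>R v1 y + (1 - h y) *\<^sub>R v2 y) \<le> 1" by simp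
  qed simp
  moreover have "w \<in> B" unfolding w_def
    using add_closed[OF multiplier_closed[OF h v1] multiplier_closed[OF h' v2]] .
  ultimately show ?thesis using K_dual_ball_onD(3)[OF P] by force
qed

lemma K_dual_ball_on_divide:
  assumes lin: "K_linear_on K sc B \<Psi>" and in_K: "\<And>u. u \<in> B \<Longrightarrow> \<Psi> u \<in> K" and c: "c > 0"
    and bound: "\<And>u. u \<in> B \<Longrightarrow> cmod (\<Psi> u) \<le> c * supnorm Y u"
  shows "(\<lambda>u. \<Psi> u / complex_of_real c) \<in> K_dual_ball_on K sc Y B"
  unfolding K_dual_ball_on_def K_linear_on_def
proof (intro CollectI conjI ballI)
  fix u v assume "u \<in> B" "v \<in> B"
  then show "\<Psi> (\<lambda>y. u y + v y) / complex_of_real c = \<Psi> u / complex_of_real c + \<Psi> v / complex_of_real c"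
    using K_linear_onD(1)[OF lin] by (simp add: add_divide_distrib)
next
  fix a u assume "a \<in> K" "u \<in> B"
  then show "\<Psi> (\<lambda>y. sc a (u y)) / complex_of_real c = a * (\<Psi> u / complex_of_real c)"
    using K_linear_onD(2)[OF lin] by simp
next
  fix u assume u: "u \<in> B"
  show "\<Psi> u / complex_of_real c \<in> K" using K_divide_closed[OF in_K[OF u] of_real_in_K] .
  show "cmod (\<Psi> u / complex_of_real c) \<le> supnorm Y u"
    using bound[OF u] c by (simp add: norm_divide divide_le_eq mult.commute)
qed

lemma Ext_on_norming:
  assumes E: "\<Phi> \<in> Ext_on K sc Y B" and u0: "u0 \<in> B" "\<Phi> u0 \<noteq> 0" and e: "\<epsilon> > 0"
  shows "\<exists>u\<in>B. supnorm Y u \<le> 1 \<and> cmod (\<Phi> u) > 1 - \<epsilon>"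
proof (rule ccontr)
  assume none: "\<not> (\<exists>u\<in>B. supnorm Y u \<le> 1 \<and> cmod (\<Phi> u) > 1 - \<epsilon>)"
  define e where "e = min \<epsilon> (1 / 2)"
  have e0: "0 < e" "e < 1" using e e_def by auto
  note P = Ext_onD[OF E]
  note lin = K_dual_ball_onD(1)[OF P]
  have bound: "cmod (\<Phi> u) \<le> (1 - e) * supnorm Y u" if "u \<in> B" for u
    using none e_def e0 by (intro K_linear_on_bound[OF lin _ _ that]) fastforce+
  have P1: "(\<lambda>u. \<Phi> u / complex_of_real (1 - e)) \<in> K_dual_ball_on K sc Y B"
    by (rule K_dual_ball_on_divide[OF lin K_dual_ball_onD(2)[OF P] _ bound]) (use e0 in simp_all)
  have P2: "(\<lambda>u. 0) \<in> K_dual_ball_on K sc Y B"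
    unfolding K_dual_ball_on_def K_linear_on_def using supnorm_nonneg_on of_real_in_K[of 0] by simp
  have "\<Phi> u = complex_of_real (1 - e) * (\<Phi> u / complex_of_real (1 - e)) + complex_of_real (1 - (1 - e)) * 0"
    for u using e0 by (simp del: of_real_diff)
  then have "\<Phi> u0 / complex_of_real (1 - e) = 0"
    using Ext_on_convex_combinationD[OF E P1 P2, of "1 - e" u0] e0 u0(1) by simp
  then show False using u0(2) e0 by simp
qed

definition part_norm :: "(('y \<Rightarrow> 'f) \<Rightarrow> complex) \<Rightarrow> ('y \<Rightarrow> real) \<Rightarrow> real" where
  "part_norm \<Phi> h = Sup {cmod (\<Phi> (\<lambda>y. h y *\<^sub>R u y)) | u. u \<in> B \<and> supnorm Y u \<le> 1}"

lemma part_norm_bounds: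
  assumes P: "\<Phi> \<in> K_dual_ball_on K sc Y B" and h: "h \<in> unit_multipliers B"
  shows "0 \<le> part_norm \<Phi> h"
    and "u \<in> B \<Longrightarrow> cmod (\<Phi> (\<lambda>y. h y *\<^sub>R u y)) \<le> part_norm \<Phi> h * supnorm Y u"
    and "part_norm \<Phi> h + part_norm \<Phi> (\<lambda>y. 1 - h y) \<le> 1"
proof -
  define N where "N h = {cmod (\<Phi> (\<lambda>y. h y *\<^sub>R u y)) | u. u \<in> B \<and> supnorm Y u \<le> 1}" for h
  have pn: "part_norm \<Phi> h = Sup (N h)" for h unfolding part_norm_def N_def ..
  have h': "(\<lambda>y. 1 - h y) \<in> unit_multipliers B" by (rule unit_multiplier_complement[OF h])
  have zero: "0 \<in> N g" for g
  proof -
    have "supnorm Y (\<lambda>y. 0::'f) \<le> 1" by (rule supnorm_le) auto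
    then show ?thesis unfolding N_def using zero_closed K_linear_on_zero[OF K_dual_ball_onD(1)[OF P]] by force
  qed
  have pair: "x1 + x2 \<le> 1" if x1: "x1 \<in> N h" and x2: "x2 \<in> N (\<lambda>y. 1 - h y)" for x1 x2
  proof -
    obtain u1 where "u1 \<in> B" "supnorm Y u1 \<le> 1" "x1 = cmod (\<Phi> (\<lambda>y. h y *\<^sub>R u1 y))"
      using x1 unfolding N_def by blast
    moreover obtain u2 where "u2 \<in> B" "supnorm Y u2 \<le> 1" "x2 = cmod (\<Phi> (\<lambda>y. (1 - h y) *\<^sub>R u2 y))"
      using x2 unfolding N_def by blast
    ultimately show ?thesis using K_dual_ball_on_split_le_1[OF P h] by simp
  qed
  have N_le_1: "x \<le> 1" if "x \<in> N h \<or> x \<in> N (\<lambda>y. 1 - h y)" for x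
    using that pair[OF _ zero] pair[OF zero] by fastforce
  have bdd: "bdd_above (N h)" "bdd_above (N (\<lambda>y. 1 - h y))"
    by (rule bdd_aboveI[of _ 1], use N_le_1 in blast)+
  show nonneg: "0 \<le> part_norm \<Phi> h" unfolding pn by (rule cSup_upper[OF zero bdd(1)])
  show "cmod (\<Phi> (\<lambda>y. h y *\<^sub>R u y)) \<le> part_norm \<Phi> h * supnorm Y u" if u: "u \<in> B"
  proof (rule K_linear_on_bound[OF K_linear_on_multiplier[OF K_dual_ball_onD(1)[OF P] h] nonneg _ u])
    fix v assume "v \<in> B" "supnorm Y v \<le> 1"
    then have "cmod (\<Phi> (\<lambda>y. h y *\<^sub>R v y)) \<in> N h" unfolding N_def by blast
    then show "cmod (\<Phi> (\<lambda>y. h y *\<^sub>R v y)) \<le> part_norm \<Phi> h" unfolding pn by (rule cSup_upper[OF _ bdd(1)])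
  qed
  have sup_le: "Sup (N h) \<le> 1 - x2" if x2: "x2 \<in> N (\<lambda>y. 1 - h y)" for x2
  proof (rule cSup_least)
    show "N h \<noteq> {}" using zero by blast
    show "x1 \<le> 1 - x2" if "x1 \<in> N h" for x1 using pair[OF that x2] by simp
  qed
  have "Sup (N (\<lambda>y. 1 - h y)) \<le> 1 - Sup (N h)"
  proof (rule cSup_least)
    show "N (\<lambda>y. 1 - h y) \<noteq> {}" using zero by blast
    show "x2 \<le> 1 - Sup (N h)" if "x2 \<in> N (\<lambda>y. 1 - h y)" for x2 using sup_le[OF that] by linarith
  qed
  then show "part_norm \<Phi> h + part_norm \<Phi> (\<lambda>y. 1 - h y) \<le> 1" unfolding pn by simp
qed

lemma Ext_on_part_norms_ge_1:
  assumes E: "\<Phi> \<in> Ext_on K sc Y B" and h: "h \<in> unit_multipliers B" and u0: "u0 \<in> B" "\<Phi> u0 \<noteq> 0"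
  shows "1 \<le> part_norm \<Phi> h + part_norm \<Phi> (\<lambda>y. 1 - h y)"
proof (rule ccontr)
  note P = Ext_onD[OF E]
  have h': "(\<lambda>y. 1 - h y) \<in> unit_multipliers B" by (rule unit_multiplier_complement[OF h])
  let ?\<alpha> = "part_norm \<Phi> h" and ?\<beta> = "part_norm \<Phi> (\<lambda>y. 1 - h y)"
  assume "\<not> 1 \<le> ?\<alpha> + ?\<beta>"
  then have "1 - (?\<alpha> + ?\<beta>) > 0" by simp
  from Ext_on_norming[OF E u0 this] obtain u where u: "u \<in> B" "supnorm Y u \<le> 1" "cmod (\<Phi> u) > ?\<alpha> + ?\<beta>"
    by auto
  have "cmod (\<Phi> u) \<le> cmod (\<Phi> (\<lambda>y. h y *\<^sub>R u y)) + cmod (\<Phi> (\<lambda>y. (1 - h y) *\<^sub>R u y))"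
    unfolding K_linear_on_split[OF K_dual_ball_onD(1)[OF P] h u(1)] by (rule norm_triangle_ineq)
  also have "\<dots> \<le> ?\<alpha> * supnorm Y u + ?\<beta> * supnorm Y u"
    using part_norm_bounds(2)[OF P h u(1)] part_norm_bounds(2)[OF P h' u(1)] by simp
  also have "\<dots> \<le> ?\<alpha> + ?\<beta>"
    using u(2) part_norm_bounds(1)[OF P h] part_norm_bounds(1)[OF P h'] supnorm_nonneg_on[OF u(1)]
    by (intro add_mono) (simp_all add: mult_left_le)
  finally show False using u(3) by simp
qed

text \<open>If the two pieces \<open>\<Phi>(h\<cdot>)\<close> and \<open>\<Phi>((1 - h)\<cdot>)\<close> have norms \<open>\<alpha>\<close> and \<open>1 - \<alpha>\<close>, the
  normalised pieces exhibit \<open>\<Phi>\<close> as a convex combination; extremality makes them equal.\<close>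

lemma Ext_on_split_proportional:
  assumes E: "\<Phi> \<in> Ext_on K sc Y B" and h: "h \<in> unit_multipliers B" and \<alpha>: "0 < \<alpha>" "\<alpha> < 1"
    and bound1: "\<And>u. u \<in> B \<Longrightarrow> cmod (\<Phi> (\<lambda>y. h y *\<^sub>R u y)) \<le> \<alpha> * supnorm Y u"
    and bound2: "\<And>u. u \<in> B \<Longrightarrow> cmod (\<Phi> (\<lambda>y. (1 - h y) *\<^sub>R u y)) \<le> (1 - \<alpha>) * supnorm Y u"
    and u: "u \<in> B"
  shows "\<Phi> (\<lambda>y. h y *\<^sub>R u y) = complex_of_real \<alpha> * \<Phi> u"
proof -
  note P = Ext_onD[OF E]
  note lin = K_dual_ball_onD(1)[OF P]
  have h': "(\<lambda>y. 1 - h y) \<in> unit_multipliers B" by (rule unit_multiplier_complement[OF h])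
  define P1 where "P1 v = \<Phi> (\<lambda>y. h y *\<^sub>R v y) / complex_of_real \<alpha>" for v
  define P2 where "P2 v = \<Phi> (\<lambda>y. (1 - h y) *\<^sub>R v y) / complex_of_real (1 - \<alpha>)" for v
  have P1: "P1 \<in> K_dual_ball_on K sc Y B" unfolding P1_def
    by (rule K_dual_ball_on_divide[OF K_linear_on_multiplier[OF lin h]
          K_dual_ball_onD(2)[OF P multiplier_closed[OF h]] _ bound1]) (use \<alpha> in auto)
  have P2: "P2 \<in> K_dual_ball_on K sc Y B" unfolding P2_def
    by (rule K_dual_ball_on_divide[OF K_linear_on_multiplier[OF lin h']
          K_dual_ball_onD(2)[OF P multiplier_closed[OF h']] _ bound2]) (use \<alpha> in auto)
  have nz: "complex_of_real \<alpha> \<noteq> 0" "complex_of_real (1 - \<alpha>) \<noteq> 0" using \<alpha> by auto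
  have comb: "\<Phi> v = complex_of_real \<alpha> * P1 v + complex_of_real (1 - \<alpha>) * P2 v" if "v \<in> B" for v
    using K_linear_on_split[OF lin h that] nz unfolding P1_def P2_def by (simp del: of_real_diff)
  have "P1 u = P2 u" using Ext_on_convex_combinationD[OF E P1 P2 _ _ comb u] \<alpha> by blast
  then have "\<Phi> u = P1 u" using comb[OF u] by (simp add: algebra_simps)
  then show ?thesis using nz unfolding P1_def by simp
qed

lemma Ext_on_multiplier:
  assumes E: "\<Phi> \<in> Ext_on K sc Y B" and h: "h \<in> unit_multipliers B"
  obtains a :: real where "\<And>u. u \<in> B \<Longrightarrow> \<Phi> (\<lambda>y. h y *\<^sub>R u y) = complex_of_real a * \<Phi> u"
proof (cases "\<forall>u\<in>B. \<Phi> u = 0")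
  case True
  then show ?thesis using that[of 0] multiplier_closed[OF h] by simp
next
  case False
  then obtain u0 where u0: "u0 \<in> B" "\<Phi> u0 \<noteq> 0" by blast
  note P = Ext_onD[OF E]
  have h': "(\<lambda>y. 1 - h y) \<in> unit_multipliers B" by (rule unit_multiplier_complement[OF h])
  define \<alpha> where "\<alpha> = part_norm \<Phi> h"
  have \<beta>: "part_norm \<Phi> (\<lambda>y. 1 - h y) = 1 - \<alpha>"
    using part_norm_bounds(3)[OF P h] Ext_on_part_norms_ge_1[OF E h u0] unfolding \<alpha>_def by simp
  have bound1: "cmod (\<Phi> (\<lambda>y. h y *\<^sub>R u y)) \<le> \<alpha> * supnorm Y u" if "u \<in> B" for u
    using part_norm_bounds(2)[OF P h that] unfolding \<alpha>_def .
  have bound2: "cmod (\<Phi> (\<lambda>y. (1 - h y) *\<^sub>R u y)) \<le> (1 - \<alpha>) * supnorm Y u" if "u \<in> B" for u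
    using part_norm_bounds(2)[OF P h' that] unfolding \<beta> .
  consider "\<alpha> = 0" | "\<alpha> = 1" | "0 < \<alpha> \<and> \<alpha> < 1"
    using part_norm_bounds(1)[OF P h] part_norm_bounds(1)[OF P h'] unfolding \<alpha>_def \<beta> by linarith
  then show ?thesis
  proof cases
    case 1
    then show ?thesis using that[of 0] bound1 by simp
  next
    case 2
    then show ?thesis using that[of 1] bound2 K_linear_on_split[OF K_dual_ball_onD(1)[OF P] h] by simp
  next
    case 3
    then show ?thesis using that Ext_on_split_proportional[OF E h _ _ bound1 bound2] by blast
  qed
qed

lemma const_on_at: "y \<in> topspace Y \<Longrightarrow> const_on Y c y = c"
  unfolding const_on_def by simp

lemma const_on_add: "const_on Y ((c::'f) + d) = (\<lambda>y. const_on Y c y + const_on Y d y)"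
  unfolding const_on_def by (simp add: fun_eq_iff)

lemma const_on_sc: "a \<in> K \<Longrightarrow> const_on Y (sc a c) = (\<lambda>y. sc a (const_on Y c y))"
  unfolding const_on_def using sc_eq_0_iff by (auto simp: fun_eq_iff)

text \<open>If \<open>\<Psi>\<^sub>1\<close> did not vanish on some \<open>(1 - h) u\<close>, the splitting bound would keep
  \<open>\<bar>\<Psi>\<^sub>1(h v)\<bar>\<close> uniformly below 1, contradicting the norming hypothesis.\<close>

lemma K_dual_ball_on_complement_vanishes:
  assumes P1: "\<Psi>1 \<in> K_dual_ball_on K sc Y B" and P2: "\<Psi>2 \<in> K_dual_ball_on K sc Y B"
    and t: "0 < t" "t < 1" and h: "h \<in> unit_multipliers B"
    and norming: "\<And>\<epsilon>. \<epsilon> > 0 \<Longrightarrow> \<exists>v\<in>B. supnorm Y v \<le> 1 \<and>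
        cmod (complex_of_real t * \<Psi>1 (\<lambda>y. h y *\<^sub>R v y) + complex_of_real (1 - t) * \<Psi>2 (\<lambda>y. h y *\<^sub>R v y)) > 1 - \<epsilon>"
    and u: "u \<in> B"
  shows "\<Psi>1 (\<lambda>y. (1 - h y) *\<^sub>R u y) = 0"
proof (rule ccontr)
  assume ne: "\<Psi>1 (\<lambda>y. (1 - h y) *\<^sub>R u y) \<noteq> 0"
  have h': "(\<lambda>y. 1 - h y) \<in> unit_multipliers B" by (rule unit_multiplier_complement[OF h])
  define s where "s = max 1 (supnorm Y u)"
  have s1: "s \<ge> 1" unfolding s_def by simp
  define u' where "u' = (\<lambda>y. (1 / s) *\<^sub>R u y)"
  have u': "u' \<in> B" unfolding u'_def using scaleR_closed[OF u] .
  have u'_norm: "supnorm Y u' \<le> 1" unfolding u'_def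
  proof (rule supnorm_le)
    fix y assume "y \<in> topspace Y"
    then have "norm (u y) \<le> s" using supnorm_upper_on[OF u] s_def by (meson max.cobounded2 order_trans)
    then show "norm ((1 / s) *\<^sub>R u y) \<le> 1" using s1 by (simp add: divide_le_eq_1)
  qed simp
  define \<delta> where "\<delta> = cmod (\<Psi>1 (\<lambda>y. (1 - h y) *\<^sub>R u' y))"
  have "\<Psi>1 (\<lambda>y. (1 - h y) *\<^sub>R u' y) = complex_of_real (1 / s) * \<Psi>1 (\<lambda>y. (1 - h y) *\<^sub>R u y)"
    unfolding u'_def using K_linear_on_scaleR[OF K_linear_on_multiplier[OF K_dual_ball_onD(1)[OF P1] h'] u, of "1 / s"]
    by simp
  then have \<delta>: "\<delta> > 0" unfolding \<delta>_def using ne s1 by simp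
  obtain v where v: "v \<in> B" "supnorm Y v \<le> 1" and big:
    "cmod (complex_of_real t * \<Psi>1 (\<lambda>y. h y *\<^sub>R v y) + complex_of_real (1 - t) * \<Psi>2 (\<lambda>y. h y *\<^sub>R v y)) > 1 - t * \<delta>"
    using norming[of "t * \<delta>"] t \<delta> by auto
  have "cmod (\<Psi>1 (\<lambda>y. h y *\<^sub>R v y)) \<le> 1 - \<delta>"
    using K_dual_ball_on_split_le_1[OF P1 h v u' u'_norm] unfolding \<delta>_def by simp
  moreover have "cmod (\<Psi>2 (\<lambda>y. h y *\<^sub>R v y)) \<le> 1"
    using K_dual_ball_on_split_le_1[OF P2 h v zero_closed] K_linear_on_zero[OF K_dual_ball_onD(1)[OF P2]]
    by (simp add: supnorm_le)
  ultimately have "t * cmod (\<Psi>1 (\<lambda>y. h y *\<^sub>R v y)) + (1 - t) * cmod (\<Psi>2 (\<lambda>y. h y *\<^sub>R v y))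
      \<le> t * (1 - \<delta>) + (1 - t) * 1"
    using t by (intro add_mono mult_left_mono) simp_all
  moreover have "cmod (complex_of_real t * \<Psi>1 (\<lambda>y. h y *\<^sub>R v y) + complex_of_real (1 - t) * \<Psi>2 (\<lambda>y. h y *\<^sub>R v y))
      \<le> t * cmod (\<Psi>1 (\<lambda>y. h y *\<^sub>R v y)) + (1 - t) * cmod (\<Psi>2 (\<lambda>y. h y *\<^sub>R v y))"
    using norm_triangle_ineq[of "complex_of_real t * \<Psi>1 (\<lambda>y. h y *\<^sub>R v y)"
        "complex_of_real (1 - t) * \<Psi>2 (\<lambda>y. h y *\<^sub>R v y)"] t
    by (simp add: norm_mult del: of_real_diff)
  ultimately show False using big by (simp add: algebra_simps)
qed

lemma K_dual_ball_on_point_evaluation: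
  assumes p: "p \<in> K_dual_ball K sc" and y0: "y0 \<in> topspace Y"
  shows "(\<lambda>u. p (u y0)) \<in> K_dual_ball_on K sc Y B"
proof -
  have "cmod (p (u y0)) \<le> supnorm Y u" if "u \<in> B" for u
    using K_dual_ballD(2)[OF p] supnorm_upper_on[OF that y0] by (rule order_trans)
  then show ?thesis
    unfolding K_dual_ball_on_def K_linear_on_def using K_dualD[OF K_dual_ballD(1)[OF p]] by simp
qed

lemma K_dual_ball_on_restrict_const:
  assumes P: "\<Psi> \<in> K_dual_ball_on K sc Y B"
  shows "(\<lambda>c. \<Psi> (const_on Y c)) \<in> K_dual_ball K sc"
proof (rule K_dual_ballI)
  note lin = K_dual_ball_onD(1)[OF P]
  show "\<Psi> (const_on Y c) \<in> K" for c using K_dual_ball_onD(2)[OF P const_closed] .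
  show "\<Psi> (const_on Y (c + d)) = \<Psi> (const_on Y c) + \<Psi> (const_on Y d)" for c d
    unfolding const_on_add using K_linear_onD(1)[OF lin const_closed const_closed] .
  show "\<Psi> (const_on Y (sc a c)) = a * \<Psi> (const_on Y c)" if "a \<in> K" for a c
    unfolding const_on_sc[OF that] using K_linear_onD(2)[OF lin that const_closed] .
  show "cmod (\<Psi> (const_on Y c)) \<le> norm c" for c
    using K_dual_ball_onD(3)[OF P const_closed] supnorm_const_on order_trans by blast
qed

lemma K_linear_on_through_point:
  assumes lin: "K_linear_on K sc B \<Psi>" and y0: "y0 \<in> topspace Y"
    and vanish: "\<And>u. u \<in> B \<Longrightarrow> u y0 = 0 \<Longrightarrow> \<Psi> u = 0" and u: "u \<in> B"
  shows "\<Psi> u = \<Psi> (const_on Y (u y0))"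
proof -
  have "\<Psi> (\<lambda>y. u y - const_on Y (u y0) y) = 0"
    using vanish[OF diff_closed[OF u const_closed[of "u y0"]]] by (simp add: const_on_at[OF y0])
  then show ?thesis using K_linear_on_diff[OF lin u const_closed] by simp
qed

text \<open>The multiplier \<open>h\<^sub>n = 1 - min 1 (n\<parallel>u\<parallel>)\<close> satisfies \<open>h\<^sub>n(y\<^sub>0) = 1\<close> because
  \<open>u(y\<^sub>0) = 0\<close>, while \<open>\<parallel>h\<^sub>n u\<parallel> \<le> 1/n\<close>.\<close>

lemma K_dual_ball_on_vanishing_at_point:
  assumes P: "\<Psi> \<in> K_dual_ball_on K sc Y B"
    and off: "\<And>h u. h \<in> unit_multipliers B \<Longrightarrow> h y0 = 1 \<Longrightarrow> u \<in> B \<Longrightarrow> \<Psi> (\<lambda>y. (1 - h y) *\<^sub>R u y) = 0"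
    and u: "u \<in> B" "u y0 = 0"
  shows "\<Psi> u = 0"
proof -
  have small: "cmod (\<Psi> u) \<le> 1 / n" if n: "n > 0" for n :: real
  proof -
    define h where "h y = 1 - min 1 (n * norm (u y))" for y
    have h: "h \<in> unit_multipliers B"
      unfolding h_def using unit_multiplier_complement[OF bump_multiplier[OF u(1) n]] .
    have "h y0 = 1" unfolding h_def using u(2) by simp
    then have "\<Psi> u = \<Psi> (\<lambda>y. h y *\<^sub>R u y)"
      using K_linear_on_split[OF K_dual_ball_onD(1)[OF P] h u(1)] off[OF h _ u(1)] by simp
    moreover have "supnorm Y (\<lambda>y. h y *\<^sub>R u y) \<le> 1 / n"
    proof (rule supnorm_le)
      show "norm (h y *\<^sub>R u y) \<le> 1 / n" for y unfolding h_def by (rule norm_bump_complement_le[OF n])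
    qed (use n in simp)
    ultimately show ?thesis using K_dual_ball_onD(3)[OF P multiplier_closed[OF h u(1)]] by simp
  qed
  show ?thesis
  proof (rule ccontr)
    assume "\<Psi> u \<noteq> 0"
    then have pos: "cmod (\<Psi> u) > 0" by simp
    then have "cmod (\<Psi> u) \<le> cmod (\<Psi> u) / 2" using small[of "2 / cmod (\<Psi> u)"] by simp
    then show False using pos by simp
  qed
qed

text \<open>Like \<open>p\<close> itself, each piece of the decomposition is normed by functions concentrated
  where \<open>h = 1\<close>, so it vanishes on \<open>(1 - h) v\<close> and only sees the value at \<open>y\<^sub>0\<close>.\<close>

lemma point_evaluation_split_through_point:
  assumes p: "p \<in> Ext K sc" "p w \<noteq> 0" and y0: "y0 \<in> topspace Y"
    and P1: "\<Psi>1 \<in> K_dual_ball_on K sc Y B" and P2: "\<Psi>2 \<in> K_dual_ball_on K sc Y B" and t: "0 < t" "t < 1"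
    and comb: "\<And>v. v \<in> B \<Longrightarrow> p (v y0) = complex_of_real t * \<Psi>1 v + complex_of_real (1 - t) * \<Psi>2 v"
    and v: "v \<in> B"
  shows "\<Psi>1 v = \<Psi>1 (const_on Y (v y0))"
proof -
  have norming: "\<exists>u\<in>B. supnorm Y u \<le> 1 \<and>
      cmod (complex_of_real t * \<Psi>1 (\<lambda>y. h y *\<^sub>R u y) + complex_of_real (1 - t) * \<Psi>2 (\<lambda>y. h y *\<^sub>R u y)) > 1 - \<epsilon>"
    if h: "h \<in> unit_multipliers B" and hy: "h y0 = 1" and e: "\<epsilon> > 0" for h \<epsilon>
  proof -
    obtain c where c: "norm c \<le> 1" "cmod (p c) > 1 - \<epsilon>" using Ext_norming[OF p e] .
    have "p c = complex_of_real t * \<Psi>1 (\<lambda>y. h y *\<^sub>R const_on Y c y)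
        + complex_of_real (1 - t) * \<Psi>2 (\<lambda>y. h y *\<^sub>R const_on Y c y)"
      using comb[OF multiplier_closed[OF h const_closed]] hy by (simp add: const_on_at[OF y0])
    then show ?thesis using c const_closed supnorm_const_on[of c] by (intro bexI[of _ "const_on Y c"]) auto
  qed
  show ?thesis
  proof (rule K_linear_on_through_point[OF K_dual_ball_onD(1)[OF P1] y0 _ v])
    show "\<Psi>1 u = 0" if "u \<in> B" "u y0 = 0" for u
    proof (rule K_dual_ball_on_vanishing_at_point[OF P1 _ that])
      show "\<Psi>1 (\<lambda>y. (1 - h y) *\<^sub>R u y) = 0" if "h \<in> unit_multipliers B" "h y0 = 1" "u \<in> B" for h u
        using K_dual_ball_on_complement_vanishes[OF P1 P2 t that(1) norming[OF that(1,2)] that(3)] .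
    qed
  qed
qed

lemma Ext_on_point_evaluation:
  assumes p: "p \<in> Ext K sc" and pw: "p w \<noteq> 0" and y0: "y0 \<in> topspace Y"
  shows "(\<lambda>u. p (u y0)) \<in> Ext_on K sc Y B"
proof (rule Ext_onI)
  show "(\<lambda>u. p (u y0)) \<in> K_dual_ball_on K sc Y B"
    using K_dual_ball_on_point_evaluation[OF ExtD(1)[OF p] y0] .
  fix \<Psi>1 \<Psi>2 t u
  assume P1: "\<Psi>1 \<in> K_dual_ball_on K sc Y B" and P2: "\<Psi>2 \<in> K_dual_ball_on K sc Y B" and t: "0 < t" "t < 1"
    and comb: "\<And>v. v \<in> B \<Longrightarrow> p (v y0) = complex_of_real t * \<Psi>1 v + complex_of_real (1 - t) * \<Psi>2 v"
    and u: "u \<in> B"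
  have t': "0 < 1 - t" "1 - t < 1" using t by auto
  have comb': "p (v y0) = complex_of_real (1 - t) * \<Psi>2 v + complex_of_real (1 - (1 - t)) * \<Psi>1 v"
    if "v \<in> B" for v
    using comb[OF that] by (simp add: algebra_simps)
  have through1: "\<Psi>1 v = \<Psi>1 (const_on Y (v y0))" if "v \<in> B" for v
    using point_evaluation_split_through_point[OF p pw y0 P1 P2 t comb that] .
  have through2: "\<Psi>2 v = \<Psi>2 (const_on Y (v y0))" if "v \<in> B" for v
    using point_evaluation_split_through_point[OF p pw y0 P2 P1 t' comb' that] .
  have "p = (\<lambda>c. complex_of_real t * \<Psi>1 (const_on Y c) + complex_of_real (1 - t) * \<Psi>2 (const_on Y c))"
  proof
    fix c show "p c = complex_of_real t * \<Psi>1 (const_on Y c) + complex_of_real (1 - t) * \<Psi>2 (const_on Y c)"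
      using comb[OF const_closed] by (simp add: const_on_at[OF y0])
  qed
  then have "(\<lambda>c. \<Psi>1 (const_on Y c)) = (\<lambda>c. \<Psi>2 (const_on Y c))"
    by (rule Ext_convex_combinationD[OF p K_dual_ball_on_restrict_const[OF P1]
          K_dual_ball_on_restrict_const[OF P2] t])
  then show "\<Psi>1 u = \<Psi>2 u" using through1[OF u] through2[OF u] by (metis fun_cong)
qed

lemma multiplier_with_point_section:
  assumes S_closed: "\<And>u. u \<in> B \<Longrightarrow> S u \<in> B"
    and S_add: "\<And>u v. u \<in> B \<Longrightarrow> v \<in> B \<Longrightarrow> S (\<lambda>y. u y + v y) = (\<lambda>y. S u y + S v y)"
    and S_sc: "\<And>a u. a \<in> K \<Longrightarrow> u \<in> B \<Longrightarrow> S (\<lambda>y. sc a (u y)) = (\<lambda>y. sc a (S u y))"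
    and S_bound: "\<And>u. u \<in> B \<Longrightarrow> supnorm Y (S u) \<le> C * supnorm Y u"
    and coef: "\<And>p. p \<in> Ext K sc \<Longrightarrow> a p \<in> K \<and> (\<forall>u\<in>B. p (S u y0) = a p * p (u y0))"
    and y0: "y0 \<in> topspace Y"
  shows "multiplier_with K sc (\<lambda>c. S (const_on Y c) y0) a"
  unfolding multiplier_with_def K_cont_linear_def
proof (intro conjI allI ballI)
  show "S (const_on Y (c + d)) y0 = S (const_on Y c) y0 + S (const_on Y d) y0" for c d
    unfolding const_on_add S_add[OF const_closed const_closed] ..
  show "S (const_on Y (sc b c)) y0 = sc b (S (const_on Y c) y0)" if "b \<in> K" for b c
    unfolding const_on_sc[OF that] S_sc[OF that const_closed] ..
  have "norm (S (const_on Y c) y0) \<le> max C 0 * norm c" for c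
  proof -
    have "norm (S (const_on Y c) y0) \<le> C * supnorm Y (const_on Y c)"
      using supnorm_upper_on[OF S_closed[OF const_closed] y0] S_bound[OF const_closed] by (rule order_trans)
    also have "\<dots> \<le> max C 0 * supnorm Y (const_on Y c)"
      using supnorm_nonneg_on[OF const_closed] by (intro mult_right_mono) auto
    also have "\<dots> \<le> max C 0 * norm c"
      using supnorm_const_on by (intro mult_left_mono) auto
    finally show ?thesis .
  qed
  then show "\<exists>C. \<forall>c. norm (S (const_on Y c) y0) \<le> C * norm c" by blast
  show "a p \<in> K" if "p \<in> Ext K sc" for p using coef[OF that] by blast
  show "p \<circ> (\<lambda>c. S (const_on Y c) y0) = (\<lambda>c. a p * p c)" if "p \<in> Ext K sc" for p
    using coef[OF that] const_closed by (auto simp: fun_eq_iff const_on_at[OF y0])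
qed

text \<open>The operator \<open>c \<mapsto> S(const_on Y c)(y\<^sub>0)\<close> on \<open>F\<close> multiplies every extreme functional
  by a \<^emph>\<open>real\<close> number, so it is its own adjoint and lies in the centralizer \<open>Z(F) = K\<close>.\<close>

lemma centralizer_one_dim_pointwise_scalar:
  assumes Z: "centralizer_one_dim K sc"
    and S_closed: "\<And>u. u \<in> B \<Longrightarrow> S u \<in> B"
    and S_add: "\<And>u v. u \<in> B \<Longrightarrow> v \<in> B \<Longrightarrow> S (\<lambda>y. u y + v y) = (\<lambda>y. S u y + S v y)"
    and S_sc: "\<And>a u. a \<in> K \<Longrightarrow> u \<in> B \<Longrightarrow> S (\<lambda>y. sc a (u y)) = (\<lambda>y. sc a (S u y))"
    and S_bound: "\<And>u. u \<in> B \<Longrightarrow> supnorm Y (S u) \<le> C * supnorm Y u"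
    and S_Ext: "\<And>\<Phi>. \<Phi> \<in> Ext_on K sc Y B \<Longrightarrow> \<exists>a::real. \<forall>u\<in>B. \<Phi> (S u) = complex_of_real a * \<Phi> u"
    and y0: "y0 \<in> topspace Y"
  obtains k where "k \<in> K" "\<And>u. u \<in> B \<Longrightarrow> S u y0 = sc k (u y0)"
proof -
  have "\<exists>a::real. \<forall>u\<in>B. p (S u y0) = complex_of_real a * p (u y0)" if p: "p \<in> Ext K sc" for p
  proof (cases "\<exists>w. p w \<noteq> 0")
    case True
    then obtain w where "p w \<noteq> 0" by blast
    from S_Ext[OF Ext_on_point_evaluation[OF p this y0]] show ?thesis by simp
  qed simp
  then obtain a :: "('f \<Rightarrow> complex) \<Rightarrow> real"
    where a: "\<And>p u. p \<in> Ext K sc \<Longrightarrow> u \<in> B \<Longrightarrow> p (S u y0) = complex_of_real (a p) * p (u y0)"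
    by metis
  let ?S0 = "\<lambda>c. S (const_on Y c) y0"
  have "multiplier_with K sc ?S0 (\<lambda>p. complex_of_real (a p))"
  proof (rule multiplier_with_point_section[OF S_closed S_add S_sc S_bound _ y0])
    show "complex_of_real (a p) \<in> K \<and> (\<forall>u\<in>B. p (S u y0) = complex_of_real (a p) * p (u y0))"
      if "p \<in> Ext K sc" for p
      using a[OF that] of_real_in_K by blast
  qed
  then have "?S0 \<in> centralizer K sc" unfolding centralizer_def by fastforce
  then obtain k where k: "k \<in> K" and S0: "?S0 = sc k"
    using Z unfolding centralizer_one_dim_def by blast
  have "S u y0 = sc k (u y0)" if u: "u \<in> B" for u
  proof (rule ccontr)
    assume "S u y0 \<noteq> sc k (u y0)"
    then obtain p where p: "p \<in> Ext K sc" and ne: "p (S u y0 - sc k (u y0)) \<noteq> 0"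
      using Ext_separates_points[OF Z, of "S u y0 - sc k (u y0)"] by auto
    have "complex_of_real (a p) * p c = k * p c" for c
      using a[OF p const_closed, of c] fun_cong[OF S0, of c] K_dualD(3)[OF ExtD(2)[OF p] k]
      by (auto simp: const_on_at[OF y0])
    then have "p (S u y0 - sc k (u y0)) = 0"
      using a[OF p u] K_dual_diff[OF ExtD(2)[OF p]] K_dualD(3)[OF ExtD(2)[OF p] k] by simp
    then show False using ne by contradiction
  qed
  then show ?thesis using that k by blast
qed

end

section \<open>Surjective isometries are biseparating\<close>

locale function_space_isometry =
  X: function_space K scE X A + Y: function_space K scF Y B
  for K :: "complex set" and scE :: "complex \<Rightarrow> 'e::banach \<Rightarrow> 'e" and X :: "'x topology"
    and A :: "('x \<Rightarrow> 'e) set" and scF :: "complex \<Rightarrow> 'f::banach \<Rightarrow> 'f" and Y :: "'y topology"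
    and B :: "('y \<Rightarrow> 'f) set" +
  fixes T :: "('x \<Rightarrow> 'e) \<Rightarrow> ('y \<Rightarrow> 'f)"
  assumes maps: "f \<in> A \<Longrightarrow> T f \<in> B"
    and surj: "T ` A = B"
    and add: "f \<in> A \<Longrightarrow> g \<in> A \<Longrightarrow> T (\<lambda>x. f x + g x) = (\<lambda>y. T f y + T g y)"
    and hom: "a \<in> K \<Longrightarrow> f \<in> A \<Longrightarrow> T (\<lambda>x. scE a (f x)) = (\<lambda>y. scF a (T f y))"
    and isometric: "f \<in> A \<Longrightarrow> supnorm Y (T f) = supnorm X f"
begin

lemma diff: "f \<in> A \<Longrightarrow> g \<in> A \<Longrightarrow> T (\<lambda>x. f x - g x) = (\<lambda>y. T f y - T g y)"
  using add[OF X.diff_closed, of f g g] by (simp add: fun_eq_iff algebra_simps)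

lemma zero: "T (\<lambda>x. 0) = (\<lambda>y. 0)"
  using diff[OF X.zero_closed X.zero_closed] by simp

lemma inj: "inj_on T A"
proof (rule inj_onI)
  fix f g assume fg: "f \<in> A" "g \<in> A" "T f = T g"
  have "supnorm X (\<lambda>x. f x - g x) = supnorm Y (\<lambda>y. 0::'f)"
    using isometric[OF X.diff_closed[OF fg(1,2)]] diff[OF fg(1,2)] fg(3) by simp
  also have "\<dots> \<le> 0" by (rule supnorm_le) auto
  finally have "(\<lambda>x. f x - g x) = (\<lambda>x. 0)" by (rule X.supnorm_eq_0_imp[OF X.diff_closed[OF fg(1,2)]])
  then show "f = g" by (simp add: fun_eq_iff)
qed

lemma inv_into_maps: "u \<in> B \<Longrightarrow> inv_into A T u \<in> A"
  by (rule inv_into_into) (simp add: surj)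

lemma f_inv_into: "u \<in> B \<Longrightarrow> T (inv_into A T u) = u"
  using f_inv_into_f[of u T A] surj by simp

lemma inv_into_f: "f \<in> A \<Longrightarrow> inv_into A T (T f) = f"
  by (rule inv_into_f_f[OF inj])

lemma inverse_isometry: "function_space_isometry K scF Y B scE X A (inv_into A T)"
proof (intro function_space_isometry.intro Y.function_space_axioms X.function_space_axioms
    function_space_isometry_axioms.intro)
  show "inv_into A T u \<in> A" if "u \<in> B" for u using inv_into_maps[OF that] .
  show "inv_into A T ` B = A"
  proof
    show "inv_into A T ` B \<subseteq> A" using inv_into_maps by blast
    show "A \<subseteq> inv_into A T ` B"
    proof
      fix f assume "f \<in> A"
      then show "f \<in> inv_into A T ` B" using inv_into_f[of f] maps[of f] by (metis image_eqI)
    qed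
  qed
  show "inv_into A T (\<lambda>y. u y + v y) = (\<lambda>x. inv_into A T u x + inv_into A T v x)" if "u \<in> B" "v \<in> B" for u v
    using inv_into_f[OF X.add_closed[OF inv_into_maps inv_into_maps]] add[OF inv_into_maps inv_into_maps]
      f_inv_into that by simp
  show "inv_into A T (\<lambda>y. scF a (u y)) = (\<lambda>x. scE a (inv_into A T u x))" if "a \<in> K" "u \<in> B" for a u
    using inv_into_f[OF X.sc_closed[OF that(1) inv_into_maps[OF that(2)]]]
      hom[OF that(1) inv_into_maps[OF that(2)]] f_inv_into[OF that(2)] by simp
  show "supnorm X (inv_into A T u) = supnorm Y u" if "u \<in> B" for u
    using isometric[OF inv_into_maps[OF that]] f_inv_into[OF that] by simp
qed

lemma K_dual_ball_on_pullback:
  assumes P: "\<Phi> \<in> K_dual_ball_on K scF Y B"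
  shows "(\<lambda>f. \<Phi> (T f)) \<in> K_dual_ball_on K scE X A"
  unfolding K_dual_ball_on_def K_linear_on_def
proof (intro CollectI conjI ballI)
  note lin = K_dual_ball_onD(1)[OF P]
  show "\<Phi> (T (\<lambda>x. f x + g x)) = \<Phi> (T f) + \<Phi> (T g)" if "f \<in> A" "g \<in> A" for f g
    unfolding add[OF that] using K_linear_onD(1)[OF lin maps maps] that .
  show "\<Phi> (T (\<lambda>x. scE a (f x))) = a * \<Phi> (T f)" if "a \<in> K" "f \<in> A" for a f
    unfolding hom[OF that] using K_linear_onD(2)[OF lin that(1) maps[OF that(2)]] .
  show "\<Phi> (T f) \<in> K" if "f \<in> A" for f using K_dual_ball_onD(2)[OF P maps[OF that]] .
  show "cmod (\<Phi> (T f)) \<le> supnorm X f" if "f \<in> A" for f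
    using K_dual_ball_onD(3)[OF P maps[OF that]] isometric[OF that] by simp
qed

lemma Ext_on_pullback:
  assumes E: "\<Phi> \<in> Ext_on K scF Y B"
  shows "(\<lambda>f. \<Phi> (T f)) \<in> Ext_on K scE X A"
proof (rule Ext_onI)
  show "(\<lambda>f. \<Phi> (T f)) \<in> K_dual_ball_on K scE X A"
    by (rule K_dual_ball_on_pullback[OF Ext_onD[OF E]])
  note inv_pullback = function_space_isometry.K_dual_ball_on_pullback[OF inverse_isometry]
  fix \<Psi>1 \<Psi>2 t f
  assume P1: "\<Psi>1 \<in> K_dual_ball_on K scE X A" and P2: "\<Psi>2 \<in> K_dual_ball_on K scE X A" and t: "0 < t" "t < 1"
    and comb: "\<And>g. g \<in> A \<Longrightarrow> \<Phi> (T g) = complex_of_real t * \<Psi>1 g + complex_of_real (1 - t) * \<Psi>2 g"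
    and f: "f \<in> A"
  have "\<Phi> u = complex_of_real t * \<Psi>1 (inv_into A T u) + complex_of_real (1 - t) * \<Psi>2 (inv_into A T u)"
    if "u \<in> B" for u
    using comb[OF inv_into_maps[OF that]] by (simp add: f_inv_into[OF that])
  from Ext_on_convex_combinationD[OF E inv_pullback[OF P1] inv_pullback[OF P2] t this maps[OF f]]
  show "\<Psi>1 f = \<Psi>2 f" by (simp add: inv_into_f[OF f])
qed

lemma conjugate_multiplier_pointwise:
  assumes Z: "centralizer_one_dim K scF" and h: "h \<in> unit_multipliers A" and y: "y \<in> topspace Y"
  obtains k where "k \<in> K" "\<And>u. u \<in> B \<Longrightarrow> T (\<lambda>x. h x *\<^sub>R inv_into A T u x) y = scF k (u y)"
proof -
  note inv_add = function_space_isometry.add[OF inverse_isometry]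
    and inv_hom = function_space_isometry.hom[OF inverse_isometry]
    and inv_isometric = function_space_isometry.isometric[OF inverse_isometry]
  define S where "S u = T (\<lambda>x. h x *\<^sub>R inv_into A T u x)" for u
  have hA: "(\<lambda>x. h x *\<^sub>R inv_into A T u x) \<in> A" if "u \<in> B" for u
    by (rule X.multiplier_closed[OF h inv_into_maps[OF that]])
  have S_closed: "S u \<in> B" if "u \<in> B" for u
    unfolding S_def using maps[OF hA[OF that]] .
  have S_add: "S (\<lambda>y. u y + v y) = (\<lambda>y. S u y + S v y)" if "u \<in> B" "v \<in> B" for u v
    unfolding S_def inv_add[OF that] using add[OF hA hA] that by (simp add: scaleR_right_distrib)
  have S_sc: "S (\<lambda>y. scF a (u y)) = (\<lambda>y. scF a (S u y))" if "a \<in> K" "u \<in> B" for a u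
    unfolding S_def inv_hom[OF that] using hom[OF that(1) hA[OF that(2)]] X.sc_scaleR[OF that(1)] by simp
  have S_bound: "supnorm Y (S u) \<le> 1 * supnorm Y u" if u: "u \<in> B" for u
    using X.supnorm_multiplier_le[OF h inv_into_maps[OF u]]
    unfolding S_def isometric[OF hA[OF u]] inv_isometric[OF u] by simp
  have S_Ext: "\<exists>a::real. \<forall>u\<in>B. \<Phi> (S u) = complex_of_real a * \<Phi> u" if E: "\<Phi> \<in> Ext_on K scF Y B" for \<Phi>
  proof -
    obtain a :: real where a: "\<And>f. f \<in> A \<Longrightarrow> \<Phi> (T (\<lambda>x. h x *\<^sub>R f x)) = complex_of_real a * \<Phi> (T f)"
      using X.Ext_on_multiplier[OF Ext_on_pullback[OF E] h] by blast
    have "\<Phi> (S u) = complex_of_real a * \<Phi> u" if "u \<in> B" for u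
      unfolding S_def using a[OF inv_into_maps[OF that]] by (simp add: f_inv_into[OF that])
    then show ?thesis by blast
  qed
  show ?thesis
    using Y.centralizer_one_dim_pointwise_scalar[OF Z S_closed S_add S_sc S_bound S_Ext y] that
    unfolding S_def by blast
qed

lemma disjoint_cozero_value_le:
  assumes Z: "centralizer_one_dim K scF" and f: "f \<in> A" and g: "g \<in> A"
    and disj: "cozero X f \<inter> cozero X g = {}" and y: "y \<in> topspace Y" and gy: "T g y \<noteq> 0"
    and n: "n > 0"
  shows "norm (T f y) \<le> 1 / n"
proof -
  define h where "h x = min 1 (n * norm (f x))" for x
  have h: "h \<in> unit_multipliers A" unfolding h_def using X.bump_multiplier[OF f n] .
  obtain k where k: "k \<in> K" and Sk: "\<And>u. u \<in> B \<Longrightarrow> T (\<lambda>x. h x *\<^sub>R inv_into A T u x) y = scF k (u y)"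
    using conjugate_multiplier_pointwise[OF Z h y] by blast
  have "(\<lambda>x. h x *\<^sub>R g x) = (\<lambda>x. 0)"
  proof
    fix x show "h x *\<^sub>R g x = 0"
    proof (cases "x \<in> topspace X")
      case True
      then show ?thesis using disj unfolding cozero_def h_def by auto
    qed (simp add: X.vanishes_outside[OF g])
  qed
  then have "scF k (T g y) = 0" using Sk[OF maps[OF g]] inv_into_f[OF g] zero by simp
  then have "k = 0" using Y.sc_eq_0_iff[OF k] gy by simp
  then have "T (\<lambda>x. h x *\<^sub>R f x) y = 0" using Sk[OF maps[OF f]] inv_into_f[OF f] Y.sc_zero by simp
  then have "norm (T f y) = norm (T (\<lambda>x. f x - h x *\<^sub>R f x) y)"
    using diff[OF f X.multiplier_closed[OF h f]] by simp
  also have "\<dots> \<le> supnorm X (\<lambda>x. f x - h x *\<^sub>R f x)"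
    using Y.supnorm_upper_on[OF maps[OF X.diff_closed[OF f X.multiplier_closed[OF h f]]] y]
      isometric[OF X.diff_closed[OF f X.multiplier_closed[OF h f]]] by simp
  also have "\<dots> \<le> 1 / n"
    using n norm_bump_complement_le[OF n] by (intro supnorm_le) (simp_all add: h_def scaleR_diff_left)
  finally show ?thesis .
qed

lemma separating:
  assumes Z: "centralizer_one_dim K scF"
  shows "separating X Y A T"
  unfolding separating_def
proof (intro conjI ballI impI)
  show "T (\<lambda>x. f x + g x) = (\<lambda>y. T f y + T g y)" if "f \<in> A" "g \<in> A" for f g using add[OF that] .
  fix f g assume f: "f \<in> A" and g: "g \<in> A" and disj: "cozero X f \<inter> cozero X g = {}"
  show "cozero Y (T f) \<inter> cozero Y (T g) = {}"
  proof (rule ccontr)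
    assume "cozero Y (T f) \<inter> cozero Y (T g) \<noteq> {}"
    then obtain y where y: "y \<in> topspace Y" and fy: "T f y \<noteq> 0" and gy: "T g y \<noteq> 0"
      unfolding cozero_def by blast
    have "norm (T f y) \<le> norm (T f y) / 2"
      using disjoint_cozero_value_le[OF Z f g disj y gy, of "2 / norm (T f y)"] fy by simp
    then show False using fy by simp
  qed
qed

theorem biseparating:
  assumes "centralizer_one_dim K scE" "centralizer_one_dim K scF"
  shows "biseparating X Y A B T"
  unfolding biseparating_def bij_betw_def
  using inj surj separating[OF assms(2)]
    function_space_isometry.separating[OF inverse_isometry assms(1)] by blast

end

section \<open>Bounded continuous and bounded uniformly continuous functions\<close>

lemma bounded_image_unit_scaleR:
  fixes w :: "'y \<Rightarrow> 'f::real_normed_vector"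
  assumes "\<And>y. 0 \<le> h y \<and> h y \<le> 1" "bounded (w ` S)"
  shows "bounded ((\<lambda>y. h y *\<^sub>R w y) ` S)"
proof -
  obtain C where "\<forall>y\<in>S. norm (w y) \<le> C" using assms(2) unfolding bounded_iff by auto
  moreover have "norm (h y *\<^sub>R w y) \<le> norm (w y)" for y
    using assms(1)[of y] by (simp add: mult_left_le_one_le)
  ultimately show ?thesis unfolding bounded_iff by (intro exI[of _ C]) (auto intro: order_trans)
qed

lemma bounded_image_const_on:
  fixes c :: "'f::real_normed_vector"
  shows "bounded (const_on X c ` S)"
  by (rule bounded_subset[of "{0, c}"]) (auto simp: const_on_def)

lemma continuous_map_scaleR:
  fixes w :: "'x \<Rightarrow> 'f::real_normed_vector"
  shows "continuous_map X euclideanreal h \<Longrightarrow> continuous_map X euclidean w \<Longrightarrow>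
    continuous_map X euclidean (\<lambda>x. h x *\<^sub>R w x)"
  by (simp add: continuous_map_atin tendsto_scaleR)

lemma continuous_map_bounded_linear_comp:
  fixes w :: "'x \<Rightarrow> 'f::real_normed_vector"
  shows "bounded_linear L \<Longrightarrow> continuous_map X euclidean w \<Longrightarrow> continuous_map X euclidean (\<lambda>x. L (w x))"
  by (simp add: continuous_map_atin bounded_linear.tendsto)

lemma (in K_banach_space) function_space_Cb: "function_space K sc X (Cb X :: ('x \<Rightarrow> 'f) set)"
proof (intro function_space.intro K_banach_space_axioms function_space_axioms.intro)
  show "bounded (u ` topspace X)" if "u \<in> Cb X" for u :: "'x \<Rightarrow> 'f"
    using that unfolding Cb_def by auto
  show "u y = 0" if "u \<in> Cb X" "y \<notin> topspace X" for u :: "'x \<Rightarrow> 'f" and y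
    using that unfolding Cb_def by auto
next
  fix u v :: "'x \<Rightarrow> 'f" assume u: "u \<in> Cb X" and v: "v \<in> Cb X"
  then show "(\<lambda>y. u y + v y) \<in> Cb X"
    unfolding Cb_def by (auto intro: continuous_map_add bounded_plus_comp)
next
  fix a and u :: "'x \<Rightarrow> 'f" assume a: "a \<in> K" and u: "u \<in> Cb X"
  have "bounded (sc a ` u ` topspace X)"
    using u bounded_linear_image[OF _ bounded_linear_sc[OF a]] unfolding Cb_def by blast
  then show "(\<lambda>y. sc a (u y)) \<in> Cb X"
    using u continuous_map_bounded_linear_comp[OF bounded_linear_sc[OF a]] sc_eq_0_iff[OF a]
    unfolding Cb_def by (auto simp: image_image)
next
  fix u :: "'x \<Rightarrow> 'f" and n :: real assume u: "u \<in> Cb X" and n: "n > 0"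
  define h where "h y = min 1 (n * norm (u y))" for y
  have h_bounds: "0 \<le> h y \<and> h y \<le> 1" for y unfolding h_def using n by simp
  have "continuous_map X euclideanreal h"
    using u unfolding Cb_def h_def by (intro continuous_map_real_min continuous_map_real_mult_left continuous_map_norm) auto
  then have "(\<lambda>y. h y *\<^sub>R w y) \<in> Cb X" if "w \<in> Cb X" for w
    using that continuous_map_scaleR bounded_image_unit_scaleR[OF h_bounds] unfolding Cb_def by auto
  then show "(\<lambda>y. min 1 (n * norm (u y))) \<in> unit_multipliers (Cb X)"
    using h_bounds unfolding unit_multipliers_def h_def by blast
next
  fix c :: 'f
  have "continuous_map X euclidean (const_on X c)"
    by (rule continuous_map_eq[of _ _ "\<lambda>x. c"]) (auto simp: const_on_def)
  moreover have "bounded (const_on X c ` topspace X)" by (rule bounded_image_const_on)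
  moreover have "const_on X c x = 0" if "x \<notin> topspace X" for x using that by (simp add: const_on_def)
  ultimately show "const_on X c \<in> Cb X" unfolding Cb_def by blast
qed

lemma uniformly_continuous_map_euclideanD:
  assumes "uniformly_continuous_map m euclidean_metric f" "\<epsilon> > 0"
  obtains \<delta> where "\<delta> > 0" "\<And>x y. x \<in> mspace m \<Longrightarrow> y \<in> mspace m \<Longrightarrow> mdist m y x < \<delta> \<Longrightarrow> dist (f y) (f x) < \<epsilon>"
  using assms unfolding uniformly_continuous_map_def by fastforce

lemma Lipschitz_imp_uniformly_continuous_map_comp:
  assumes "\<And>a b. dist (g a) (g b) \<le> L * dist a b" "uniformly_continuous_map m euclidean_metric f"
  shows "uniformly_continuous_map m euclidean_metric (\<lambda>x. g (f x))"
proof -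
  have "Lipschitz_continuous_map euclidean_metric euclidean_metric g"
    unfolding Lipschitz_continuous_map_def using assms(1) by auto
  from uniformly_continuous_map_compose[OF assms(2) Lipschitz_imp_uniformly_continuous_map[OF this]]
  show ?thesis unfolding o_def .
qed

lemma uniformly_continuous_map_bounded_linear_comp:
  assumes "bounded_linear L" "uniformly_continuous_map m euclidean_metric f"
  shows "uniformly_continuous_map m euclidean_metric (\<lambda>x. L (f x))"
proof -
  obtain C where "\<And>x. norm (L x) \<le> norm x * C" using bounded_linear.bounded[OF assms(1)] by blast
  then have "dist (L a) (L b) \<le> C * dist a b" for a b
    by (metis dist_norm linear_diff[OF bounded_linear.linear[OF assms(1)]] mult.commute)
  then show ?thesis using Lipschitz_imp_uniformly_continuous_map_comp assms(2) by blast
qed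

lemma uniformly_continuous_map_add:
  fixes f g :: "'x \<Rightarrow> 'f::real_normed_vector"
  assumes "uniformly_continuous_map m euclidean_metric f" "uniformly_continuous_map m euclidean_metric g"
  shows "uniformly_continuous_map m euclidean_metric (\<lambda>x. f x + g x)"
proof -
  have "uniformly_continuous_map m euclidean_metric (\<lambda>x. (f x, g x))"
    using assms uniformly_continuous_map_paired[of m euclidean_metric euclidean_metric f g] by simp
  then show ?thesis
    using uniformly_continuous_map_bounded_linear_comp[OF bounded_linear_add[OF bounded_linear_fst bounded_linear_snd]]
    by fastforce
qed

lemma uniformly_continuous_map_scaleR:
  fixes w :: "'x \<Rightarrow> 'f::real_normed_vector"
  assumes h: "uniformly_continuous_map m euclidean_metric h" and h_bounds: "\<And>x. \<bar>h x\<bar> \<le> 1"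
    and w: "uniformly_continuous_map m euclidean_metric w" and w_bounded: "bounded (w ` mspace m)"
  shows "uniformly_continuous_map m euclidean_metric (\<lambda>x. h x *\<^sub>R w x)"
proof -
  obtain C where C: "C > 0" "\<And>x. x \<in> mspace m \<Longrightarrow> norm (w x) \<le> C"
    using w_bounded unfolding bounded_pos by auto
  have "\<exists>\<delta>>0. \<forall>x\<in>mspace m. \<forall>y\<in>mspace m. mdist m y x < \<delta> \<longrightarrow> dist (h y *\<^sub>R w y) (h x *\<^sub>R w x) < \<epsilon>"
    if e: "\<epsilon> > 0" for \<epsilon>
  proof -
    obtain d1 where d1: "d1 > 0"
      and h_close: "\<And>x y. x \<in> mspace m \<Longrightarrow> y \<in> mspace m \<Longrightarrow> mdist m y x < d1 \<Longrightarrow> dist (h y) (h x) < \<epsilon> / (2 * C)"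
      using uniformly_continuous_map_euclideanD[OF h, of "\<epsilon> / (2 * C)"] e C(1) by auto
    obtain d2 where d2: "d2 > 0"
      and w_close: "\<And>x y. x \<in> mspace m \<Longrightarrow> y \<in> mspace m \<Longrightarrow> mdist m y x < d2 \<Longrightarrow> dist (w y) (w x) < \<epsilon> / 2"
      using uniformly_continuous_map_euclideanD[OF w, of "\<epsilon> / 2"] e by auto
    have "dist (h y *\<^sub>R w y) (h x *\<^sub>R w x) < \<epsilon>"
      if x: "x \<in> mspace m" and y: "y \<in> mspace m" and xy: "mdist m y x < min d1 d2" for x y
    proof -
      have "h y *\<^sub>R w y - h x *\<^sub>R w x = (h y - h x) *\<^sub>R w y + h x *\<^sub>R (w y - w x)"
        by (simp add: algebra_simps)
      then have "dist (h y *\<^sub>R w y) (h x *\<^sub>R w x) \<le> \<bar>h y - h x\<bar> * norm (w y) + \<bar>h x\<bar> * dist (w y) (w x)"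
        by (metis dist_norm norm_scaleR norm_triangle_ineq)
      also have "\<bar>h y - h x\<bar> * norm (w y) \<le> \<epsilon> / (2 * C) * C"
        using h_close[OF x y] C(2)[OF y] xy by (intro mult_mono) (simp_all add: dist_real_def)
      also have "\<bar>h x\<bar> * dist (w y) (w x) \<le> dist (w y) (w x)"
        using h_bounds[of x] by (simp add: mult_left_le_one_le)
      also have "\<epsilon> / (2 * C) * C + dist (w y) (w x) < \<epsilon> / 2 + \<epsilon> / 2"
        using w_close[OF x y] xy C(1) by simp
      finally show ?thesis by simp
    qed
    then show ?thesis using d1 d2 by (intro exI[of _ "min d1 d2"]) simp
  qed
  then show ?thesis unfolding uniformly_continuous_map_def by simp
qed

lemma uniformly_continuous_map_bump:
  assumes "uniformly_continuous_map m euclidean_metric (u :: 'x \<Rightarrow> 'f::real_normed_vector)" "n > 0"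
  shows "uniformly_continuous_map m euclidean_metric (\<lambda>x. min 1 (n * norm (u x)))"
proof (rule Lipschitz_imp_uniformly_continuous_map_comp[OF _ assms(1)])
  fix a b :: 'f
  have "\<bar>min 1 (n * norm a) - min 1 (n * norm b)\<bar> \<le> \<bar>n * norm a - n * norm b\<bar>"
    by (auto simp: min_def abs_if)
  also have "\<dots> = n * \<bar>norm a - norm b\<bar>" using assms(2) by (simp add: abs_mult flip: right_diff_distrib)
  also have "\<dots> \<le> n * dist a b" using assms(2) by (simp add: dist_norm norm_triangle_ineq3)
  finally show "dist (min 1 (n * norm a)) (min 1 (n * norm b)) \<le> n * dist a b" by (simp add: dist_real_def)
qed

lemma (in K_banach_space) function_space_Cbu:
  "function_space K sc (mtopology_of m) (Cbu m :: ('x \<Rightarrow> 'f) set)"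
proof (intro function_space.intro K_banach_space_axioms function_space_axioms.intro)
  show "bounded (u ` topspace (mtopology_of m))" if "u \<in> Cbu m" for u :: "'x \<Rightarrow> 'f"
    using that unfolding Cbu_def by auto
  show "u y = 0" if "u \<in> Cbu m" "y \<notin> topspace (mtopology_of m)" for u :: "'x \<Rightarrow> 'f" and y
    using that unfolding Cbu_def by auto
next
  fix u v :: "'x \<Rightarrow> 'f" assume u: "u \<in> Cbu m" and v: "v \<in> Cbu m"
  then show "(\<lambda>y. u y + v y) \<in> Cbu m"
    unfolding Cbu_def by (auto intro: uniformly_continuous_map_add bounded_plus_comp)
next
  fix a and u :: "'x \<Rightarrow> 'f" assume a: "a \<in> K" and u: "u \<in> Cbu m"
  have "bounded (sc a ` u ` mspace m)"
    using u bounded_linear_image[OF _ bounded_linear_sc[OF a]] unfolding Cbu_def by blast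
  then show "(\<lambda>y. sc a (u y)) \<in> Cbu m"
    using u uniformly_continuous_map_bounded_linear_comp[OF bounded_linear_sc[OF a]] sc_eq_0_iff[OF a]
    unfolding Cbu_def by (auto simp: image_image)
next
  fix u :: "'x \<Rightarrow> 'f" and n :: real assume u: "u \<in> Cbu m" and n: "n > 0"
  define h where "h y = min 1 (n * norm (u y))" for y
  have h_bounds: "0 \<le> h y \<and> h y \<le> 1" for y unfolding h_def using n by simp
  have "uniformly_continuous_map m euclidean_metric h"
    using uniformly_continuous_map_bump[OF _ n] u unfolding Cbu_def h_def by blast
  then have "(\<lambda>y. h y *\<^sub>R w y) \<in> Cbu m" if "w \<in> Cbu m" for w
    using that uniformly_continuous_map_scaleR[of m h w] h_bounds bounded_image_unit_scaleR[OF h_bounds]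
    unfolding Cbu_def by (auto simp: abs_le_iff)
  then show "(\<lambda>y. min 1 (n * norm (u y))) \<in> unit_multipliers (Cbu m)"
    using h_bounds unfolding unit_multipliers_def h_def by blast
next
  fix c :: 'f
  have "uniformly_continuous_map m euclidean_metric (const_on (mtopology_of m) c)"
    by (rule uniformly_continuous_map_eq[where f = "\<lambda>x. c"]) (auto simp: const_on_def uniformly_continuous_map_const)
  moreover have "bounded (const_on (mtopology_of m) c ` mspace m)" by (rule bounded_image_const_on)
  moreover have "const_on (mtopology_of m) c x = 0" if "x \<notin> mspace m" for x
    using that by (simp add: const_on_def)
  ultimately show "const_on (mtopology_of m) c \<in> Cbu m" unfolding Cbu_def by blast
qed

theorem proposition3p5:
  fixes K :: "complex set"
    and scE :: "complex \<Rightarrow> 'e::banach \<Rightarrow> 'e" and scF :: "complex \<Rightarrow> 'f::banach \<Rightarrow> 'f"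
    and X :: "'x topology" and Y :: "'y topology"
    and AX :: "('x \<Rightarrow> 'e) set" and AY :: "('y \<Rightarrow> 'f) set"
    and T :: "('x \<Rightarrow> 'e) \<Rightarrow> ('y \<Rightarrow> 'f)"
  assumes K: "K = \<real> \<or> K = UNIV"
    and E: "K_banach K scE" and F: "K_banach K scF"
    and situation:
      "(completely_regular_space X \<and> realcompact X \<and> completely_regular_space Y \<and> realcompact Y \<and>
        K_infinite_dim K scE \<and> K_infinite_dim K scF \<and> AX = Cb X \<and> AY = Cb Y)
       \<or> (\<exists>mX mY. mcomplete_of mX \<and> mcomplete_of mY \<and> X = mtopology_of mX \<and> Y = mtopology_of mY \<and>
                  AX = Cbu mX \<and> AY = Cbu mY)"
    and ZE: "centralizer_one_dim K scE" and ZF: "centralizer_one_dim K scF"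
    and T_maps: "\<forall>f\<in>AX. T f \<in> AY" and T_surj: "T ` AX = AY"
    and T_add: "\<forall>f\<in>AX. \<forall>g\<in>AX. T (\<lambda>x. f x + g x) = (\<lambda>y. T f y + T g y)"
    and T_hom: "\<forall>a\<in>K. \<forall>f\<in>AX. T (\<lambda>x. scE a (f x)) = (\<lambda>y. scF a (T f y))"
    and T_isom: "\<forall>f\<in>AX. supnorm Y (T f) = supnorm X f"
  shows "biseparating X Y AX AY T"
proof -
  interpret E: K_banach_space K scE by (rule K_banach_space.intro[OF E K])
  interpret F: K_banach_space K scF by (rule K_banach_space.intro[OF F K])
  from situation have spaces: "function_space K scE X AX \<and> function_space K scF Y AY"
  proof
    assume "completely_regular_space X \<and> realcompact X \<and> completely_regular_space Y \<and> realcompact Y \<and>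
        K_infinite_dim K scE \<and> K_infinite_dim K scF \<and> AX = Cb X \<and> AY = Cb Y"
    then show ?thesis using E.function_space_Cb[of X] F.function_space_Cb[of Y] by simp
  next
    assume "\<exists>mX mY. mcomplete_of mX \<and> mcomplete_of mY \<and> X = mtopology_of mX \<and> Y = mtopology_of mY \<and>
        AX = Cbu mX \<and> AY = Cbu mY"
    then obtain mX mY where "X = mtopology_of mX" "Y = mtopology_of mY" "AX = Cbu mX" "AY = Cbu mY"
      by blast
    then show ?thesis using E.function_space_Cbu[of mX] F.function_space_Cbu[of mY] by simp
  qed
  have "function_space_isometry K scE X AX scF Y AY T"
    using spaces T_maps T_surj T_add T_hom T_isom
    by (simp add: function_space_isometry_def function_space_isometry_axioms_def)
  then show ?thesis using function_space_isometry.biseparating[OF _ ZE ZF] by blast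
qed

end
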